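(* Let $\pi^*\in\Pi$ be a Nash policy. (a) If $\pi^*$ is second-order stationary, there exist $\mu>0$ and a neighborhood $\mathcal V$ of $\pi^*$ in $\Pi$ such that $\langle v(\pi),\pi-\pi^*\rangle\le-\mu\|\pi-\pi^*\|^2$ for all $\pi\in\mathcal V$. (b) If $\pi^*$ is strict, there exist $\mu>0$ and a neighborhood $\mathcal V$ of $\pi^*$ in $\Pi$ such that $\langle v(\pi),\pi-\pi^*\rangle\le-\mu\|\pi-\pi^*\|$ for all $\pi\in\mathcal V$.
   Context: Standing setting. Finite $N$-player stochastic game with random stopping: players $\mathcal N$, finite states $\mathcal S$, finite action sets $\mathcal A_i$, $\mathcal A=\prod_i\mathcal A_i$, rewards $r_i:\mathcal S\times\mathcal A\to[-1,1]$, nonnegative transition weights $P(s'\mid s,a)$ with stopping probability $\zeta_{s,a}=1-\sum_{s'}P(s'\mid s,a)\ge\zeta>0$, initial distribution $\rho$. Policies $\pi_i\in\Pi_i=\Delta(\mathcal A_i)^{\mathcal S}$, $\Pi=\prod_i\Pi_i$ (Euclidean norm). Episodes: $s_0\sim\rho$; players independently draw $a_{i,t}\sim\pi_i(\cdot\mid s_t)$; stop w.p. $\zeta_{s_t,a_t}$ (time $T(\tau)$), else move to $s'$ w.p. $P(s'\mid s_t,a_t)$. $V_{i,\rho}(\pi)=\mathbb E_\pi[\sum_{t=0}^{T(\tau)}r_i(s_t,a_t)]$, $v_i(\pi)=\nabla_{\pi_i}V_{i,\rho}(\pi)$ (smooth on a neighborhood of $\Pi$), $v=(v_i)_i$, $J_v(\pi)$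 its Jacobian. Nash policy: $V_{i,\rho}(\pi^* )\ge V_{i,\rho}(\pi_i;\pi^*_{-i})$ for all $i,\pi_i$. SOS: $(\pi-\pi^* )^\top J_v(\pi^* )(\pi-\pi^* )<0$ for all $\pi\in\Pi\setminus\{\pi^*\}$. Strict: each $\pi^*_i(\cdot\mid s)$ is a point mass and $\langle v(\pi^* ),\pi-\pi^*\rangle<0$ for all $\pi\in\Pi\setminus\{\pi^*\}$. *)

theory Defs
  imports "HOL-Analysis.Analysis"
begin

text \<open>
  A policy profile is q :: 'i => 's => 'a => real, with
  q i s b = probability that player i plays b in state s.
  Transition weights P s a s' = P(s' | s, a); rewards r i s a; initial distribution rho.
\<close>

definition joint_actions :: "('i::finite \<Rightarrow> 'a set) \<Rightarrow> ('i \<Rightarrow> 'a) set" where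
  "joint_actions A = PiE UNIV A"

definition jointp :: "('i::finite \<Rightarrow> 's \<Rightarrow> 'a \<Rightarrow> real) \<Rightarrow> 's \<Rightarrow> ('i \<Rightarrow> 'a) \<Rightarrow> real" where
  "jointp q s a = (\<Prod>i\<in>UNIV. q i s (a i))"

text \<open>The policy space Pi = prod_i Delta(A_i)^S (entries outside A i are zero).\<close>
definition policies :: "('i::finite \<Rightarrow> 'a set) \<Rightarrow> ('i \<Rightarrow> 's \<Rightarrow> 'a \<Rightarrow> real) set" where
  "policies A = {q. \<forall>i s. (\<forall>b\<in>A i. 0 \<le> q i s b) \<and> (\<Sum>b\<in>A i. q i s b) = 1
                           \<and> (\<forall>b. b \<notin> A i \<longrightarrow> q i s b = 0)}"

text \<open>sub-probability of (not yet stopped and being in state s at time t)\<close>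
fun sdist :: "('i::finite \<Rightarrow> 'a set) \<Rightarrow> ('s::finite \<Rightarrow> ('i \<Rightarrow> 'a) \<Rightarrow> 's \<Rightarrow> real) \<Rightarrow> ('s \<Rightarrow> real)
              \<Rightarrow> ('i \<Rightarrow> 's \<Rightarrow> 'a \<Rightarrow> real) \<Rightarrow> nat \<Rightarrow> 's \<Rightarrow> real" where
  "sdist A P rho q 0 s' = rho s'"
| "sdist A P rho q (Suc t) s' =
     (\<Sum>s\<in>UNIV. sdist A P rho q t s * (\<Sum>a\<in>joint_actions A. jointp q s a * P s a s'))"

text \<open>V_{i,rho}(q) = E_pi[ sum_{t=0}^{T} r_i(s_t,a_t) ], written as the series over time
  of expected rewards (reward at time t is collected iff the episode has not stopped before t).
  The same formula defines V on a neighbourhood of the policy space.\<close>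
definition Vval :: "('i::finite \<Rightarrow> 'a set) \<Rightarrow> ('s::finite \<Rightarrow> ('i \<Rightarrow> 'a) \<Rightarrow> 's \<Rightarrow> real)
     \<Rightarrow> ('i \<Rightarrow> 's \<Rightarrow> ('i \<Rightarrow> 'a) \<Rightarrow> real) \<Rightarrow> ('s \<Rightarrow> real)
     \<Rightarrow> ('i \<Rightarrow> 's \<Rightarrow> 'a \<Rightarrow> real) \<Rightarrow> 'i \<Rightarrow> real" where
  "Vval A P r rho q i =
     (\<Sum>t. \<Sum>s\<in>UNIV. sdist A P rho q t s * (\<Sum>a\<in>joint_actions A. jointp q s a * r i s a))"

definition upd_coord :: "('i \<Rightarrow> 's \<Rightarrow> 'a \<Rightarrow> real) \<Rightarrow> 'i \<Rightarrow> 's \<Rightarrow> 'a \<Rightarrow> real \<Rightarrow> ('i \<Rightarrow> 's \<Rightarrow> 'a \<Rightarrow> real)" where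
  "upd_coord q i s b x = q(i := (q i)(s := (q i s)(b := x)))"

definition pderiv_coord :: "(('i \<Rightarrow> 's \<Rightarrow> 'a \<Rightarrow> real) \<Rightarrow> real) \<Rightarrow> ('i \<Rightarrow> 's \<Rightarrow> 'a \<Rightarrow> real)
     \<Rightarrow> 'i \<Rightarrow> 's \<Rightarrow> 'a \<Rightarrow> real" where
  "pderiv_coord f q i s b = deriv (\<lambda>x. f (upd_coord q i s b x)) (q i s b)"

definition vgrad :: "('i::finite \<Rightarrow> 'a set) \<Rightarrow> ('s::finite \<Rightarrow> ('i \<Rightarrow> 'a) \<Rightarrow> 's \<Rightarrow> real)
     \<Rightarrow> ('i \<Rightarrow> 's \<Rightarrow> ('i \<Rightarrow> 'a) \<Rightarrow> real) \<Rightarrow> ('s \<Rightarrow> real)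
     \<Rightarrow> ('i \<Rightarrow> 's \<Rightarrow> 'a \<Rightarrow> real) \<Rightarrow> 'i \<Rightarrow> 's \<Rightarrow> 'a \<Rightarrow> real" where
  "vgrad A P r rho q i s b = pderiv_coord (\<lambda>q. Vval A P r rho q i) q i s b"

definition pinner :: "('i::finite \<Rightarrow> 'a set) \<Rightarrow> ('i \<Rightarrow> 's::finite \<Rightarrow> 'a \<Rightarrow> real)
     \<Rightarrow> ('i \<Rightarrow> 's \<Rightarrow> 'a \<Rightarrow> real) \<Rightarrow> real" where
  "pinner A x y = (\<Sum>i\<in>UNIV. \<Sum>s\<in>UNIV. \<Sum>b\<in>A i. x i s b * y i s b)"

definition pnorm :: "('i::finite \<Rightarrow> 'a set) \<Rightarrow> ('i \<Rightarrow> 's::finite \<Rightarrow> 'a \<Rightarrow> real) \<Rightarrow> real" where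
  "pnorm A x = sqrt (pinner A x x)"

definition pdiff :: "('i \<Rightarrow> 's \<Rightarrow> 'a \<Rightarrow> real) \<Rightarrow> ('i \<Rightarrow> 's \<Rightarrow> 'a \<Rightarrow> real) \<Rightarrow> ('i \<Rightarrow> 's \<Rightarrow> 'a \<Rightarrow> real)" where
  "pdiff x y = (\<lambda>i s b. x i s b - y i s b)"

definition jac_quad :: "('i::finite \<Rightarrow> 'a set) \<Rightarrow> ('s::finite \<Rightarrow> ('i \<Rightarrow> 'a) \<Rightarrow> 's \<Rightarrow> real)
     \<Rightarrow> ('i \<Rightarrow> 's \<Rightarrow> ('i \<Rightarrow> 'a) \<Rightarrow> real) \<Rightarrow> ('s \<Rightarrow> real)
     \<Rightarrow> ('i \<Rightarrow> 's \<Rightarrow> 'a \<Rightarrow> real) \<Rightarrow> ('i \<Rightarrow> 's \<Rightarrow> 'a \<Rightarrow> real) \<Rightarrow> real" where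
  "jac_quad A P r rho q x =
     (\<Sum>i\<in>UNIV. \<Sum>s\<in>UNIV. \<Sum>b\<in>A i. \<Sum>j\<in>UNIV. \<Sum>s'\<in>UNIV. \<Sum>c\<in>A j.
        x i s b * pderiv_coord (\<lambda>q. vgrad A P r rho q i s b) q j s' c * x j s' c)"

definition is_nash :: "('i::finite \<Rightarrow> 'a set) \<Rightarrow> ('s::finite \<Rightarrow> ('i \<Rightarrow> 'a) \<Rightarrow> 's \<Rightarrow> real)
     \<Rightarrow> ('i \<Rightarrow> 's \<Rightarrow> ('i \<Rightarrow> 'a) \<Rightarrow> real) \<Rightarrow> ('s \<Rightarrow> real)
     \<Rightarrow> ('i \<Rightarrow> 's \<Rightarrow> 'a \<Rightarrow> real) \<Rightarrow> bool" where
  "is_nash A P r rho pistar \<longleftrightarrow> pistar \<in> policies A \<and>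
     (\<forall>i. \<forall>q\<in>policies A. Vval A P r rho pistar i \<ge> Vval A P r rho (pistar(i := q i)) i)"

definition is_SOS :: "('i::finite \<Rightarrow> 'a set) \<Rightarrow> ('s::finite \<Rightarrow> ('i \<Rightarrow> 'a) \<Rightarrow> 's \<Rightarrow> real)
     \<Rightarrow> ('i \<Rightarrow> 's \<Rightarrow> ('i \<Rightarrow> 'a) \<Rightarrow> real) \<Rightarrow> ('s \<Rightarrow> real)
     \<Rightarrow> ('i \<Rightarrow> 's \<Rightarrow> 'a \<Rightarrow> real) \<Rightarrow> bool" where
  "is_SOS A P r rho pistar \<longleftrightarrow>
     (\<forall>q\<in>policies A - {pistar}. jac_quad A P r rho pistar (pdiff q pistar) < 0)"

definition is_strict :: "('i::finite \<Rightarrow> 'a set) \<Rightarrow> ('s::finite \<Rightarrow> ('i \<Rightarrow> 'a) \<Rightarrow> 's \<Rightarrow> real)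
     \<Rightarrow> ('i \<Rightarrow> 's \<Rightarrow> ('i \<Rightarrow> 'a) \<Rightarrow> real) \<Rightarrow> ('s \<Rightarrow> real)
     \<Rightarrow> ('i \<Rightarrow> 's \<Rightarrow> 'a \<Rightarrow> real) \<Rightarrow> bool" where
  "is_strict A P r rho pistar \<longleftrightarrow>
     (\<forall>i s. \<exists>b\<in>A i. \<forall>c\<in>A i. pistar i s c = (if c = b then 1 else 0)) \<and>
     (\<forall>q\<in>policies A - {pistar}. pinner A (vgrad A P r rho pistar) (pdiff q pistar) < 0)"

end

theory Submission
  imports Defs
begin

text \<open>
  Fix \<open>\<kappa> > 1\<close> with \<open>(1 - \<zeta>) \<kappa>\<^sup>N < 1\<close>, \<open>N\<close> the number of players. On the open set
  of profiles whose rows have \<open>\<ell>\<^sub>1\<close>-mass below \<open>\<kappa>\<close>, the state-to-state kernel \<open>M\<close> is a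
  contraction, so \<open>I - M\<close> is invertible and the value series equals \<open>\<rho>\<^sup>T (I - M)\<^sup>-\<^sup>1 R\<close>, which
  by Cramer's rule is a rational function of the profile without poles there. Hence the individual
  gradients \<open>v\<close> and their Jacobian are again rational, in particular continuous, and all
  derivatives in the statement are genuine.

  At a Nash policy \<open>\<langle>v(\<pi>\<^sup>*), \<pi> - \<pi>\<^sup>*\<rangle> \<le> 0\<close>. For (a), by the mean value theorem
  \<open>\<langle>v(\<pi>), \<pi> - \<pi>\<^sup>*\<rangle>\<close> is this first-order term plus the Jacobian quadratic form at an
  intermediate point; by compactness of the policy space near \<open>\<pi>\<^sup>*\<close> the form at \<open>\<pi>\<^sup>*\<close> is
  \<open>\<le> -m |\<pi> - \<pi>\<^sup>*|\<^sup>2\<close>, and continuity absorbs the error. For (b), a pure strict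
  equilibrium has a uniform gap \<open>c\<close> between the gradient entry of the equilibrium action and all
  others, giving \<open>\<langle>v(\<pi>\<^sup>*), \<pi> - \<pi>\<^sup>*\<rangle> \<le> -(c/2) |\<pi> - \<pi>\<^sup>*|\<^sub>1\<close>, which survives small
  perturbations of \<open>v\<close>.
\<close>

section \<open>Profiles as vectors\<close>

definition pline :: "('i \<Rightarrow> 's \<Rightarrow> 'a \<Rightarrow> real) \<Rightarrow> real \<Rightarrow> ('i \<Rightarrow> 's \<Rightarrow> 'a \<Rightarrow> real)
    \<Rightarrow> ('i \<Rightarrow> 's \<Rightarrow> 'a \<Rightarrow> real)"
  where "pline x t h = (\<lambda>i s b. x i s b + t * h i s b)"

lemma pline_0 [simp]: "pline x 0 h = x"
  by (simp add: pline_def)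

lemma pline_pline: "pline (pline x t h) u h = pline x (u + t) h"
  by (simp add: pline_def algebra_simps)

lemma pline_1_pdiff [simp]: "pline p 1 (pdiff q p) = q"
  by (simp add: pline_def pdiff_def)

lemma pdiff_pline: "pdiff (pline p t d) p = (\<lambda>i s b. t * d i s b)"
  by (simp add: pline_def pdiff_def)

definition punit :: "'i \<Rightarrow> 's \<Rightarrow> 'a \<Rightarrow> ('i \<Rightarrow> 's \<Rightarrow> 'a \<Rightarrow> real)" where
  "punit i s b = (\<lambda>j s' c. if j = i \<and> s' = s \<and> c = b then 1 else 0)"

lemma pinner_commute: "pinner A x y = pinner A y x"
  by (simp add: pinner_def mult.commute)

lemma pinner_add_right: "pinner A h (\<lambda>i s b. X i s b + Y i s b) = pinner A h X + pinner A h Y"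
  by (simp add: pinner_def distrib_left sum.distrib)

lemma pinner_mult_right: "pinner A h (\<lambda>i s b. X i s b * c) = pinner A h X * c"
  by (simp add: pinner_def sum_distrib_right mult.assoc)

lemma pinner_zero_right [simp]: "pinner A h (\<lambda>i s b. 0) = 0"
  by (simp add: pinner_def)

lemma pinner_diff_left: "pinner A X d - pinner A Y d = pinner A (\<lambda>i s b. X i s b - Y i s b) d"
  unfolding pinner_def by (simp add: sum_subtractf left_diff_distrib)

lemma pinner_cong:
  "(\<And>i s b. b \<in> A i \<Longrightarrow> X i s b = Y i s b) \<Longrightarrow> pinner A X d = pinner A Y d"
  unfolding pinner_def by (intro sum.cong refl) auto

lemma pinner_block:
  fixes A :: "'i::finite \<Rightarrow> 'a set" and X :: "'i \<Rightarrow> 's::finite \<Rightarrow> 'a \<Rightarrow> real"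
  shows "pinner A X (\<lambda>j s' c. if j = i \<and> s' = s then Y c else 0) = (\<Sum>c\<in>A i. X i s c * Y c)"
proof -
  have "pinner A X (\<lambda>j s' c. if j = i \<and> s' = s then Y c else 0)
     = (\<Sum>j\<in>UNIV. \<Sum>s'\<in>UNIV. if j = i \<and> s' = s then (\<Sum>c\<in>A j. X j s' c * Y c) else 0)"
    unfolding pinner_def by (intro sum.cong refl) auto
  also have "\<dots> = (\<Sum>j\<in>UNIV. if j = i then (\<Sum>c\<in>A j. X j s c * Y c) else 0)"
    by (intro sum.cong refl) (simp add: sum.delta')
  also have "\<dots> = (\<Sum>c\<in>A i. X i s c * Y c)"
    by (simp add: sum.delta')
  finally show ?thesis .
qed

lemma pinner_punit:
  fixes A :: "'i::finite \<Rightarrow> 'a set" and X :: "'i \<Rightarrow> 's::finite \<Rightarrow> 'a \<Rightarrow> real"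
  assumes "finite (A i)" and "b \<in> A i"
  shows "pinner A X (punit i s b) = X i s b"
proof -
  have "punit i s b = (\<lambda>j s' c. if j = i \<and> s' = s then (if c = b then 1 else 0) else 0)"
    by (auto simp: punit_def fun_eq_iff)
  then show ?thesis
    using assms by (simp add: pinner_block if_distrib[of "\<lambda>x. _ * x"] sum.delta' cong: if_cong)
qed

lemma pnorm_nonneg: "0 \<le> pnorm A d"
  unfolding pnorm_def pinner_def by (auto intro!: sum_nonneg)

lemma pnorm_self [simp]: "pnorm A (pdiff p p) = 0"
  by (simp add: pnorm_def pinner_def pdiff_def)

lemma pnorm_scale: "pnorm A (\<lambda>i s b. t * x i s b) = \<bar>t\<bar> * pnorm A x"
proof -
  have "pinner A (\<lambda>i s b. t * x i s b) (\<lambda>i s b. t * x i s b) = t\<^sup>2 * pinner A x x"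
    unfolding pinner_def by (simp add: sum_distrib_left power2_eq_square algebra_simps)
  then show ?thesis
    by (simp add: pnorm_def real_sqrt_mult)
qed

lemma abs_coord_le_pnorm:
  fixes A :: "'i::finite \<Rightarrow> 'a set" and d :: "'i \<Rightarrow> 's::finite \<Rightarrow> 'a \<Rightarrow> real"
  assumes "finite (A i)" and "b \<in> A i"
  shows "\<bar>d i s b\<bar> \<le> pnorm A d"
proof -
  have "d i s b * d i s b \<le> (\<Sum>c\<in>A i. d i s c * d i s c)"
    using assms by (intro member_le_sum) auto
  also have "\<dots> \<le> (\<Sum>s'\<in>UNIV. \<Sum>c\<in>A i. d i s' c * d i s' c)"
    by (intro member_le_sum) (auto intro: sum_nonneg)
  also have "\<dots> \<le> (\<Sum>j\<in>UNIV. \<Sum>s'\<in>UNIV. \<Sum>c\<in>A j. d j s' c * d j s' c)"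
    by (intro member_le_sum) (auto intro!: sum_nonneg)
  finally have "sqrt (d i s b * d i s b) \<le> pnorm A d"
    unfolding pnorm_def pinner_def by (rule real_sqrt_le_mono)
  then show ?thesis
    by (simp only: real_sqrt_abs2)
qed

lemma policies_eq_if_pnorm_eq_0:
  fixes q p :: "'i::finite \<Rightarrow> 's::finite \<Rightarrow> 'a \<Rightarrow> real"
  assumes "\<And>i. finite (A i)" and "q \<in> policies A" and "p \<in> policies A"
    and "pnorm A (pdiff q p) = 0"
  shows "q = p"
proof (intro ext)
  fix i s b
  show "q i s b = p i s b"
  proof (cases "b \<in> A i")
    case True
    with assms show ?thesis
      using abs_coord_le_pnorm[of A i b "pdiff q p" s] by (simp add: pdiff_def)
  next
    case False
    with assms show ?thesis
      by (simp add: policies_def)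
  qed
qed

definition coords :: "('i::finite \<Rightarrow> 'a set) \<Rightarrow> ('i \<times> 's::finite \<times> 'a) set" where
  "coords A = (SIGMA i:UNIV. SIGMA s:UNIV. A i)"

lemma finite_coords: "(\<And>i. finite (A i)) \<Longrightarrow> finite (coords A)"
  unfolding coords_def by auto

lemma mem_coords [simp]: "(i, s, b) \<in> coords A \<longleftrightarrow> b \<in> A i"
  by (simp add: coords_def)

lemma sum_coords:
  fixes A :: "'i::finite \<Rightarrow> 'a set"
  assumes "\<And>i. finite (A i)"
  shows "(\<Sum>i\<in>UNIV. \<Sum>s\<in>(UNIV::'s::finite set). \<Sum>b\<in>A i. f i s b)
       = (\<Sum>(i, s, b)\<in>coords A. f i s b)"
  unfolding coords_def using assms
  by (simp add: sum.Sigma split_def)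

definition pnorm1 :: "('i::finite \<Rightarrow> 'a set) \<Rightarrow> ('i \<Rightarrow> 's::finite \<Rightarrow> 'a \<Rightarrow> real) \<Rightarrow> real" where
  "pnorm1 A d = (\<Sum>i\<in>UNIV. \<Sum>s\<in>UNIV. \<Sum>b\<in>A i. \<bar>d i s b\<bar>)"

lemma pnorm1_nonneg: "0 \<le> pnorm1 A d"
  unfolding pnorm1_def by (auto intro!: sum_nonneg)

lemma pnorm_eq_L2_set:
  assumes "\<And>i. finite (A i)"
  shows "pnorm A d = L2_set (\<lambda>(i, s, b). d i s b) (coords A)"
  unfolding pnorm_def pinner_def L2_set_def sum_coords[OF assms]
  by (simp add: power2_eq_square split_def)

lemma pnorm_le_pnorm1:
  assumes "\<And>i. finite (A i)"
  shows "pnorm A d \<le> pnorm1 A d"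
  unfolding pnorm_eq_L2_set[OF assms] pnorm1_def sum_coords[OF assms]
  by (rule order_trans[OF L2_set_le_sum_abs]) (simp add: split_def)

lemma pnorm1_le_sqrt_card_pnorm:
  fixes A :: "'i::finite \<Rightarrow> 'a set" and d :: "'i \<Rightarrow> 's::finite \<Rightarrow> 'a \<Rightarrow> real"
  assumes "\<And>i. finite (A i)"
  shows "pnorm1 A d \<le> sqrt (card (coords A :: ('i \<times> 's \<times> 'a) set)) * pnorm A d"
proof -
  define g where "g = (\<lambda>(i, s, b). d i s b)"
  let ?K = "coords A :: ('i \<times> 's \<times> 'a) set"
  have "pnorm1 A d = (\<Sum>k\<in>?K. \<bar>g k\<bar> * \<bar>1\<bar>)"
    unfolding pnorm1_def sum_coords[OF assms] g_def by (simp add: split_def)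
  also have "\<dots> \<le> L2_set g ?K * L2_set (\<lambda>_. 1) ?K"
    using L2_set_mult_ineq[of g "\<lambda>_. 1" ?K] by simp
  finally show ?thesis
    unfolding pnorm_eq_L2_set[OF assms] L2_set_constant g_def by (simp add: mult.commute)
qed

lemma pinner_restrict_player:
  fixes A :: "'i::finite \<Rightarrow> 'a set" and d :: "'i \<Rightarrow> 's::finite \<Rightarrow> 'a \<Rightarrow> real"
  shows "pinner A (\<lambda>j s b. if j = i then d j s b else 0) X = (\<Sum>s\<in>UNIV. \<Sum>b\<in>A i. d i s b * X i s b)"
proof -
  have "pinner A (\<lambda>j s b. if j = i then d j s b else 0) X
      = (\<Sum>j\<in>UNIV. if j = i then (\<Sum>s\<in>UNIV. \<Sum>b\<in>A j. d j s b * X j s b) else 0)"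
    unfolding pinner_def by (intro sum.cong refl) auto
  then show ?thesis
    by simp
qed

definition quad_form :: "('i::finite \<Rightarrow> 'a set) \<Rightarrow> ('i \<Rightarrow> 's::finite \<Rightarrow> 'a \<Rightarrow> 'i \<Rightarrow> 's \<Rightarrow> 'a \<Rightarrow> real)
    \<Rightarrow> ('i \<Rightarrow> 's \<Rightarrow> 'a \<Rightarrow> real) \<Rightarrow> real" where
  "quad_form A C x = (\<Sum>i\<in>UNIV. \<Sum>s\<in>UNIV. \<Sum>b\<in>A i. \<Sum>j\<in>UNIV. \<Sum>s'\<in>UNIV. \<Sum>c\<in>A j.
      x i s b * C i s b j s' c * x j s' c)"

lemma jac_quad_eq_quad_form:
  "jac_quad A P r rho p x
     = quad_form A (\<lambda>i s b j s' c. pderiv_coord (\<lambda>q. vgrad A P r rho q i s b) p j s' c) x"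
  unfolding jac_quad_def quad_form_def ..

lemma quad_form_scale: "quad_form A C (\<lambda>i s b. t * x i s b) = t\<^sup>2 * quad_form A C x"
  unfolding quad_form_def by (simp add: sum_distrib_left power2_eq_square algebra_simps)

lemma quad_form_self [simp]: "quad_form A C (pdiff p p) = 0"
  by (simp add: quad_form_def pdiff_def)

lemma quad_form_diff:
  "quad_form A C1 d - quad_form A C2 d = quad_form A (\<lambda>i s b j s' c. C1 i s b j s' c - C2 i s b j s' c) d"
  unfolding quad_form_def by (simp add: sum_subtractf algebra_simps)

lemma quad_form_cong:
  "(\<And>i s b j s' c. b \<in> A i \<Longrightarrow> c \<in> A j \<Longrightarrow> C1 i s b j s' c = C2 i s b j s' c)
    \<Longrightarrow> quad_form A C1 d = quad_form A C2 d"
  unfolding quad_form_def by (intro sum.cong refl) auto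

lemma pinner_le_pnorm1:
  assumes "\<And>i s b. b \<in> A i \<Longrightarrow> \<bar>E i s b\<bar> \<le> e"
  shows "pinner A E d \<le> e * pnorm1 A d"
proof -
  have "pinner A E d \<le> (\<Sum>i\<in>UNIV. \<Sum>s\<in>UNIV. \<Sum>b\<in>A i. e * \<bar>d i s b\<bar>)"
    unfolding pinner_def
  proof (intro sum_mono)
    fix i s b assume "b \<in> A i"
    then have "\<bar>E i s b\<bar> * \<bar>d i s b\<bar> \<le> e * \<bar>d i s b\<bar>"
      using assms by (intro mult_right_mono) auto
    moreover have "E i s b * d i s b \<le> \<bar>E i s b\<bar> * \<bar>d i s b\<bar>"
      by (simp flip: abs_mult)
    ultimately show "E i s b * d i s b \<le> e * \<bar>d i s b\<bar>"
      by linarith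
  qed
  then show ?thesis
    by (simp add: pnorm1_def sum_distrib_left)
qed

lemma quad_form_le_pnorm1:
  assumes "\<And>i s b j s' c. b \<in> A i \<Longrightarrow> c \<in> A j \<Longrightarrow> \<bar>E i s b j s' c\<bar> \<le> e"
  shows "quad_form A E d \<le> e * pnorm1 A d * pnorm1 A d"
proof -
  have "quad_form A E d \<le> (\<Sum>i\<in>UNIV. \<Sum>s\<in>UNIV. \<Sum>b\<in>A i. \<Sum>j\<in>UNIV. \<Sum>s'\<in>UNIV. \<Sum>c\<in>A j.
        e * \<bar>d i s b\<bar> * \<bar>d j s' c\<bar>)"
    unfolding quad_form_def
  proof (intro sum_mono)
    fix i s b j s' c assume "b \<in> A i" "c \<in> A j"
    then have "\<bar>E i s b j s' c\<bar> * (\<bar>d i s b\<bar> * \<bar>d j s' c\<bar>) \<le> e * (\<bar>d i s b\<bar> * \<bar>d j s' c\<bar>)"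
      using assms by (intro mult_right_mono) auto
    moreover have "d i s b * E i s b j s' c * d j s' c \<le> \<bar>E i s b j s' c\<bar> * (\<bar>d i s b\<bar> * \<bar>d j s' c\<bar>)"
      by (simp add: mult_ac flip: abs_mult)
    ultimately show "d i s b * E i s b j s' c * d j s' c \<le> e * \<bar>d i s b\<bar> * \<bar>d j s' c\<bar>"
      by (simp add: mult_ac)
  qed
  also have "\<dots> = (\<Sum>i\<in>UNIV. \<Sum>s\<in>UNIV. \<Sum>b\<in>A i. e * \<bar>d i s b\<bar> * pnorm1 A d)"
    unfolding pnorm1_def by (simp add: sum_distrib_left)
  also have "\<dots> = (\<Sum>i\<in>UNIV. \<Sum>s\<in>UNIV. \<Sum>b\<in>A i. e * \<bar>d i s b\<bar>) * pnorm1 A d"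
    by (simp only: sum_distrib_right)
  also have "\<dots> = e * pnorm1 A d * pnorm1 A d"
    unfolding pnorm1_def by (simp only: sum_distrib_left)
  finally show ?thesis .
qed

section \<open>Rational functions of a profile\<close>

definition has_pgrad :: "('i::finite \<Rightarrow> 'a set) \<Rightarrow> ('i \<Rightarrow> 's::finite \<Rightarrow> 'a \<Rightarrow> real) set
    \<Rightarrow> (('i \<Rightarrow> 's \<Rightarrow> 'a \<Rightarrow> real) \<Rightarrow> real) \<Rightarrow> ('i \<Rightarrow> 's \<Rightarrow> 'a \<Rightarrow> ('i \<Rightarrow> 's \<Rightarrow> 'a \<Rightarrow> real) \<Rightarrow> real)
    \<Rightarrow> bool" where
  "has_pgrad A U F G \<longleftrightarrow>
     (\<forall>x\<in>U. \<forall>h. ((\<lambda>t. F (pline x t h)) has_real_derivative pinner A h (\<lambda>i s b. G i s b x)) (at 0))"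

inductive rational_on :: "('i::finite \<Rightarrow> 'a set) \<Rightarrow> ('i \<Rightarrow> 's::finite \<Rightarrow> 'a \<Rightarrow> real) set
    \<Rightarrow> (('i \<Rightarrow> 's \<Rightarrow> 'a \<Rightarrow> real) \<Rightarrow> real) \<Rightarrow> bool" for A U where
  rational_on_const: "rational_on A U (\<lambda>q. c)"
| rational_on_coord: "b \<in> A i \<Longrightarrow> rational_on A U (\<lambda>q. q i s b)"
| rational_on_add: "rational_on A U f \<Longrightarrow> rational_on A U g \<Longrightarrow> rational_on A U (\<lambda>q. f q + g q)"
| rational_on_mult: "rational_on A U f \<Longrightarrow> rational_on A U g \<Longrightarrow> rational_on A U (\<lambda>q. f q * g q)"
| rational_on_inverse:
    "rational_on A U f \<Longrightarrow> (\<forall>q\<in>U. f q \<noteq> 0) \<Longrightarrow> rational_on A U (\<lambda>q. inverse (f q))"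

lemma rational_on_sum:
  "(\<And>x. x \<in> I \<Longrightarrow> rational_on A U (f x)) \<Longrightarrow> rational_on A U (\<lambda>q. \<Sum>x\<in>I. f x q)"
  by (induction I rule: infinite_finite_induct) (auto intro: rational_on.intros)

lemma rational_on_prod:
  "(\<And>x. x \<in> I \<Longrightarrow> rational_on A U (f x)) \<Longrightarrow> rational_on A U (\<lambda>q. \<Prod>x\<in>I. f x q)"
  by (induction I rule: infinite_finite_induct) (auto intro: rational_on.intros)

lemma rational_on_diff:
  assumes "rational_on A U f" and "rational_on A U g"
  shows "rational_on A U (\<lambda>q. f q - g q)"
proof -
  have "rational_on A U (\<lambda>q. f q + (-1) * g q)"
    by (intro rational_on.intros assms)
  then show ?thesis
    by simp
qed

lemma rational_on_if:
  "rational_on A U f \<Longrightarrow> rational_on A U g \<Longrightarrow> rational_on A U (\<lambda>q. if c then f q else g q)"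
  by (cases c) auto

lemma rational_on_det:
  fixes E :: "'n::finite \<Rightarrow> 'n \<Rightarrow> ('i::finite \<Rightarrow> 's::finite \<Rightarrow> 'a \<Rightarrow> real) \<Rightarrow> real"
  assumes "\<And>k l. rational_on A U (E k l)"
  shows "rational_on A U (\<lambda>q. det (\<chi> k l. E k l q))"
  unfolding det_def
  by (auto intro!: rational_on_sum rational_on_prod rational_on.intros assms)

lemma rational_on_has_pgrad:
  assumes "rational_on A U F" and fin: "\<And>i. finite (A i)"
  shows "\<exists>G. (\<forall>i s b. b \<in> A i \<longrightarrow> rational_on A U (G i s b)) \<and> has_pgrad A U F G"
  using assms(1)
proof induction
  case (rational_on_const c)
  show ?case
    by (rule exI[of _ "\<lambda>i s b q. 0"]) (simp add: has_pgrad_def rational_on.rational_on_const)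
next
  case (rational_on_coord b i s)
  have "((\<lambda>t. x i s b + t * h i s b) has_real_derivative h i s b) (at 0)" for x h
    by (auto intro!: derivative_eq_intros)
  then show ?case
    using rational_on_coord fin
    by (intro exI[of _ "\<lambda>j s' c q. punit i s b j s' c"])
      (simp add: has_pgrad_def pline_def rational_on.rational_on_const pinner_punit)
next
  case (rational_on_add f g)
  then obtain G1 G2 where
    "\<forall>i s b. b \<in> A i \<longrightarrow> rational_on A U (G1 i s b)" "has_pgrad A U f G1"
    "\<forall>i s b. b \<in> A i \<longrightarrow> rational_on A U (G2 i s b)" "has_pgrad A U g G2"
    by blast
  then show ?case
    by (intro exI[of _ "\<lambda>i s b q. G1 i s b q + G2 i s b q"])
      (auto simp: has_pgrad_def pinner_add_right intro!: rational_on.rational_on_add DERIV_add)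
next
  case (rational_on_mult f g)
  then obtain G1 G2 where G1: "\<forall>i s b. b \<in> A i \<longrightarrow> rational_on A U (G1 i s b)" "has_pgrad A U f G1"
    and G2: "\<forall>i s b. b \<in> A i \<longrightarrow> rational_on A U (G2 i s b)" "has_pgrad A U g G2"
    by blast
  have "((\<lambda>t. f (pline x t h) * g (pline x t h)) has_real_derivative
      pinner A h (\<lambda>i s b. G1 i s b x * g x + G2 i s b x * f x)) (at 0)" if "x \<in> U" for x h
  proof -
    have "((\<lambda>t. f (pline x t h) * g (pline x t h)) has_real_derivative
        pinner A h (\<lambda>i s b. G1 i s b x) * g (pline x 0 h) + pinner A h (\<lambda>i s b. G2 i s b x) * f (pline x 0 h))
        (at 0)"
      using G1(2) G2(2) that unfolding has_pgrad_def by (intro DERIV_mult) auto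
    then show ?thesis
      by (simp add: pinner_add_right pinner_mult_right)
  qed
  then show ?case
    using G1(1) G2(1) rational_on_mult
    by (intro exI[of _ "\<lambda>i s b q. G1 i s b q * g q + G2 i s b q * f q"])
      (auto simp: has_pgrad_def intro!: rational_on.rational_on_add rational_on.rational_on_mult)
next
  case (rational_on_inverse f)
  then obtain G where G: "\<forall>i s b. b \<in> A i \<longrightarrow> rational_on A U (G i s b)" "has_pgrad A U f G"
    by blast
  define df where "df q = - 1 * (inverse (f q) * inverse (f q))" for q
  have "rational_on A U (\<lambda>q. inverse (f q))"
    using rational_on_inverse(1,2) by (rule rational_on.rational_on_inverse)
  then have df: "rational_on A U df"
    unfolding df_def by (intro rational_on.rational_on_mult rational_on.rational_on_const)
  have "((\<lambda>t. inverse (f (pline x t h))) has_real_derivative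
      pinner A h (\<lambda>i s b. G i s b x * df x)) (at 0)" if "x \<in> U" for x h
  proof -
    have "((\<lambda>t. inverse (f (pline x t h))) has_real_derivative
        - (pinner A h (\<lambda>i s b. G i s b x) * inverse (f (pline x 0 h) ^ Suc (Suc 0)))) (at 0)"
      using G(2) that rational_on_inverse unfolding has_pgrad_def by (intro DERIV_inverse_fun) auto
    then show ?thesis
      by (subst pinner_mult_right) (simp add: df_def)
  qed
  then show ?case
    using G(1) df
    by (intro exI[of _ "\<lambda>i s b q. G i s b q * df q"])
      (auto simp: has_pgrad_def intro: rational_on.rational_on_mult)
qed

definition pnhds :: "('i::finite \<Rightarrow> 'a set) \<Rightarrow> ('i \<Rightarrow> 's::finite \<Rightarrow> 'a \<Rightarrow> real)
    \<Rightarrow> ('i \<Rightarrow> 's \<Rightarrow> 'a \<Rightarrow> real) filter" where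
  "pnhds A x = filtercomap (\<lambda>y. pnorm A (pdiff y x)) (nhds 0)"

lemma eventually_pnhds_iff:
  "eventually P (pnhds A x) \<longleftrightarrow> (\<exists>d>0. \<forall>y. pnorm A (pdiff y x) < d \<longrightarrow> P y)"
  unfolding pnhds_def eventually_filtercomap eventually_nhds_metric dist_real_def
  by (auto simp: pnorm_nonneg)

lemma rational_on_tendsto:
  assumes "rational_on A U F" and fin: "\<And>i. finite (A i)" and "x \<in> U"
  shows "(F \<longlongrightarrow> F x) (pnhds A x)"
  using assms(1)
proof induction
  case (rational_on_coord b i s)
  show ?case
    unfolding tendsto_iff eventually_pnhds_iff dist_real_def
  proof (intro allI impI)
    fix e :: real assume "0 < e"
    have "\<bar>pdiff y x i s b\<bar> \<le> pnorm A (pdiff y x)" for y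
      using abs_coord_le_pnorm[of A i b] fin rational_on_coord by blast
    then have "\<forall>y. pnorm A (pdiff y x) < e \<longrightarrow> \<bar>y i s b - x i s b\<bar> < e"
      unfolding pdiff_def by (meson order_le_less_trans)
    with \<open>0 < e\<close> show "\<exists>d>0. \<forall>y. pnorm A (pdiff y x) < d \<longrightarrow> \<bar>y i s b - x i s b\<bar> < e"
      by blast
  qed
next
  case (rational_on_inverse f)
  then show ?case
    using \<open>x \<in> U\<close> by (intro tendsto_inverse) auto
qed (auto intro: tendsto_add tendsto_mult)

lemma has_pgrad_DERIV_along_line:
  assumes "has_pgrad A U F G" and "pline x t h \<in> U"
  shows "((\<lambda>u. F (pline x u h)) has_real_derivative pinner A h (\<lambda>i s b. G i s b (pline x t h))) (at t)"
proof -
  have "((\<lambda>u. F (pline (pline x t h) u h)) has_real_derivative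
      pinner A h (\<lambda>i s b. G i s b (pline x t h))) (at 0)"
    using assms unfolding has_pgrad_def by blast
  then have "((\<lambda>u. F (pline x (u + t) h)) has_real_derivative
      pinner A h (\<lambda>i s b. G i s b (pline x t h))) (at 0)"
    by (simp add: pline_pline)
  then show ?thesis
    using DERIV_shift[of "\<lambda>u. F (pline x u h)" _ 0 t] by simp
qed

definition line_open :: "('i \<Rightarrow> 's \<Rightarrow> 'a \<Rightarrow> real) set \<Rightarrow> bool" where
  "line_open U \<longleftrightarrow> (\<forall>x h t. pline x t h \<in> U \<longrightarrow> eventually (\<lambda>u. pline x u h \<in> U) (nhds t))"

lemma pderiv_coord_eq_pgrad:
  fixes A :: "'i::finite \<Rightarrow> 'a set" and x :: "'i \<Rightarrow> 's::finite \<Rightarrow> 'a \<Rightarrow> real"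
  assumes fin: "\<And>i. finite (A i)" and b: "b \<in> A i" and x: "x \<in> U" and U: "line_open U"
    and eq: "\<And>y. y \<in> U \<Longrightarrow> \<Phi> y = F y" and F: "has_pgrad A U F G"
  shows "pderiv_coord \<Phi> x i s b = G i s b x"
proof -
  define x0 where "x0 = upd_coord x i s b 0"
  have line: "upd_coord x i s b u = pline x0 u (punit i s b)" for u
    by (auto simp: x0_def punit_def upd_coord_def pline_def fun_eq_iff)
  then have x0: "pline x0 (x i s b) (punit i s b) = x"
    by (metis fun_upd_triv upd_coord_def)
  have "((\<lambda>u. F (pline x0 u (punit i s b))) has_real_derivative G i s b x) (at (x i s b))"
    using has_pgrad_DERIV_along_line[OF F, of x0 "x i s b" "punit i s b"] x fin b
    by (simp add: x0 pinner_commute[of A "punit i s b"] pinner_punit)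
  moreover have "eventually (\<lambda>u. pline x0 u (punit i s b) \<in> U) (nhds (x i s b))"
    using U x x0 unfolding line_open_def by metis
  then have "eventually (\<lambda>u. \<Phi> (pline x0 u (punit i s b)) = F (pline x0 u (punit i s b))) (nhds (x i s b))"
    by (rule eventually_mono) (rule eq)
  from DERIV_cong_ev[OF refl this refl] and calculation
  have "((\<lambda>u. \<Phi> (pline x0 u (punit i s b))) has_real_derivative G i s b x) (at (x i s b))"
    by simp
  then show ?thesis
    unfolding pderiv_coord_def line by (rule DERIV_imp_deriv)
qed

lemma eventually_forall_coords:
  fixes A :: "'i::finite \<Rightarrow> 'a set" and P :: "'i \<Rightarrow> 's::finite \<Rightarrow> 'a \<Rightarrow> 'x \<Rightarrow> bool"
  assumes "\<And>i. finite (A i)" and "\<And>i s b. b \<in> A i \<Longrightarrow> eventually (P i s b) F"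
  shows "eventually (\<lambda>y. \<forall>i s. \<forall>b\<in>A i. P i s b y) F"
proof -
  have "eventually (\<lambda>y. \<forall>b\<in>A i. P i s b y) F" for i s
    using assms by (intro eventually_ball_finite) auto
  then show ?thesis
    by (simp add: eventually_all_finite)
qed

lemma eventually_pnhds_dist_less:
  fixes f :: "('i::finite \<Rightarrow> 's::finite \<Rightarrow> 'a \<Rightarrow> real) \<Rightarrow> real"
  assumes "(f \<longlongrightarrow> f p) (pnhds A p)" and "0 < e"
  shows "eventually (\<lambda>y. \<bar>f y - f p\<bar> < e) (pnhds A p)"
  using assms unfolding tendsto_iff dist_real_def by blast

section \<open>The policy space near a policy\<close>

lemma policies_convex:
  assumes p: "p \<in> policies A" and q: "q \<in> policies A" and t: "0 \<le> t" "t \<le> 1"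
  shows "pline p t (pdiff q p) \<in> policies A"
proof -
  have e: "pline p t (pdiff q p) i s b = (1 - t) * p i s b + t * q i s b" for i s b
    by (simp add: pline_def pdiff_def algebra_simps)
  show ?thesis
    unfolding policies_def
  proof (intro CollectI allI conjI ballI impI)
    fix i s
    show "\<And>b. b \<in> A i \<Longrightarrow> 0 \<le> pline p t (pdiff q p) i s b"
      unfolding e using p q t unfolding policies_def by (auto intro!: add_nonneg_nonneg mult_nonneg_nonneg)
    show "(\<Sum>b\<in>A i. pline p t (pdiff q p) i s b) = 1"
      unfolding e using p q unfolding policies_def by (simp add: sum.distrib sum_distrib_left[symmetric])
    show "\<And>b. b \<notin> A i \<Longrightarrow> pline p t (pdiff q p) i s b = 0"
      unfolding e using p q unfolding policies_def by simp
  qed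
qed

lemma policies_le_1:
  assumes "finite (A i)" and "q \<in> policies A" and "b \<in> A i"
  shows "q i s b \<le> 1"
proof -
  have "q i s b \<le> (\<Sum>c\<in>A i. q i s c)"
    using assms unfolding policies_def by (intro member_le_sum) auto
  then show ?thesis
    using assms(2) unfolding policies_def by simp
qed

text \<open>Moving from \<open>p\<close> towards \<open>q\<close>, possibly beyond \<open>q\<close>, stays in the policy space as long as
  the step length does not exceed any positive entry of \<open>p\<close>: only those entries can decrease.\<close>

lemma policies_pline_extrapolate:
  fixes p q :: "'i::finite \<Rightarrow> 's::finite \<Rightarrow> 'a \<Rightarrow> real"
  assumes fin: "\<And>i. finite (A i)" and p: "p \<in> policies A" and q: "q \<in> policies A" and t: "0 \<le> t"
    and small: "\<And>i s b. b \<in> A i \<Longrightarrow> 0 < p i s b \<Longrightarrow> t * pnorm A (pdiff q p) \<le> p i s b"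
  shows "pline p t (pdiff q p) \<in> policies A"
  unfolding policies_def
proof (intro CollectI allI conjI ballI impI)
  fix i s
  have e: "pline p t (pdiff q p) i s b = p i s b + t * (q i s b - p i s b)" for b
    by (simp add: pline_def pdiff_def)
  show "0 \<le> pline p t (pdiff q p) i s b" if b: "b \<in> A i" for b
  proof (cases "p i s b > 0")
    case True
    have "\<bar>q i s b - p i s b\<bar> \<le> pnorm A (pdiff q p)"
      using abs_coord_le_pnorm[of A i b "pdiff q p" s] fin b by (simp add: pdiff_def)
    then have "t * \<bar>q i s b - p i s b\<bar> \<le> p i s b"
      using small[OF b True] t by (meson mult_left_mono order_trans)
    moreover have "t * (- \<bar>q i s b - p i s b\<bar>) \<le> t * (q i s b - p i s b)"
      using t by (intro mult_left_mono) auto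
    ultimately show ?thesis
      unfolding e by linarith
  next
    case False
    then have "p i s b = 0" and "0 \<le> q i s b"
      using p q b unfolding policies_def by force+
    then show ?thesis
      unfolding e using t by simp
  qed
  show "(\<Sum>b\<in>A i. pline p t (pdiff q p) i s b) = 1"
    unfolding e using p q unfolding policies_def
    by (simp add: sum.distrib sum_distrib_left[symmetric] sum_subtractf)
  show "pline p t (pdiff q p) i s b = 0" if "b \<notin> A i" for b
    unfolding e using p q that unfolding policies_def by simp
qed

lemma compact_policy_sphere:
  fixes A :: "'i::finite \<Rightarrow> 'a set" and p :: "'i \<Rightarrow> 's::finite \<Rightarrow> 'a \<Rightarrow> real"
  assumes fin: "\<And>i. finite (A i)"
  shows "compact {f :: 'i \<times> 's \<times> 'a \<Rightarrow> real.
    (\<lambda>i s b. f (i, s, b)) \<in> policies A \<and> pnorm A (pdiff (\<lambda>i s b. f (i, s, b)) p) = r}"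
    (is "compact ?S")
proof -
  define B :: "'i \<times> 's \<times> 'a \<Rightarrow> real set"
    where "B k = (if k \<in> coords A then {0..1} else {0})" for k
  let ?C = "{f. \<forall>i s. (\<Sum>b\<in>A i. f (i, s, b)) = 1 \<and> pnorm A (pdiff (\<lambda>i s b. f (i, s, b)) p) = r}"
  have "compactin (product_topology (\<lambda>_. euclidean) UNIV) (PiE UNIV B)"
    unfolding compactin_PiE by (auto simp: B_def)
  then have "compact (PiE UNIV B)"
    by (simp add: euclidean_product_topology)
  moreover have "continuous_on UNIV (\<lambda>f::'i \<times> 's \<times> 'a \<Rightarrow> real. f k)" for k
    by simp
  then have "closed ?C"
    unfolding pnorm_def pinner_def pdiff_def
    by (intro closed_Collect_all closed_Collect_conj closed_Collect_eq continuous_intros)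
  moreover have "?S = PiE UNIV B \<inter> ?C"
  proof (intro set_eqI iffI)
    fix f assume f: "f \<in> ?S"
    have "f k \<in> B k" for k
    proof (cases k)
      case (fields i s b)
      then show ?thesis
        using f policies_le_1[where q="\<lambda>i s b. f (i, s, b)", OF fin] by (auto simp: B_def policies_def)
    qed
    with f show "f \<in> PiE UNIV B \<inter> ?C"
      by (auto simp: policies_def)
  next
    fix f assume "f \<in> PiE UNIV B \<inter> ?C"
    then have B: "\<And>i s b. f (i, s, b) \<in> B (i, s, b)" and "\<forall>i s. (\<Sum>b\<in>A i. f (i, s, b)) = 1"
      and "pnorm A (pdiff (\<lambda>i s b. f (i, s, b)) p) = r"
      by (auto simp: PiE_iff)
    moreover have "0 \<le> f (i, s, b)" if "b \<in> A i" for i s b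
      using B[of i s b] that by (simp add: B_def)
    moreover have "f (i, s, b) = 0" if "b \<notin> A i" for i s b
      using B[of i s b] that by (simp add: B_def)
    ultimately show "f \<in> ?S"
      by (simp add: policies_def)
  qed
  ultimately show ?thesis
    by (simp add: compact_Int_closed)
qed

lemma policies_ray_meets_sphere:
  fixes A :: "'i::finite \<Rightarrow> 'a set" and p :: "'i \<Rightarrow> 's::finite \<Rightarrow> 'a \<Rightarrow> real"
  assumes fin: "\<And>i. finite (A i)" and p: "p \<in> policies A"
  obtains r where "0 < r" and "\<And>q. q \<in> policies A \<Longrightarrow> q \<noteq> p \<Longrightarrow>
    pline p (r / pnorm A (pdiff q p)) (pdiff q p) \<in> policies A \<and>
    pnorm A (pdiff (pline p (r / pnorm A (pdiff q p)) (pdiff q p)) p) = r"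
proof -
  define Pos where "Pos = (\<lambda>(i, s, b). p i s b) ` {(i, s, b) \<in> coords A. 0 < p i s b}"
  have "finite (coords A :: ('i \<times> 's \<times> 'a) set)"
    by (rule finite_coords[OF fin])
  then have "finite Pos"
    unfolding Pos_def by (rule finite_imageI[OF finite_subset, rotated]) auto
  define r where "r = Min (insert 1 Pos)"
  have r: "0 < r"
    unfolding r_def using \<open>finite Pos\<close> by (auto simp: Pos_def)
  have r_le: "r \<le> p i s b" if "b \<in> A i" "0 < p i s b" for i s b
    unfolding r_def using \<open>finite Pos\<close> that by (intro Min_le) (auto simp: Pos_def image_iff)
  have "pline p (r / pnorm A (pdiff q p)) (pdiff q p) \<in> policies A \<and>
      pnorm A (pdiff (pline p (r / pnorm A (pdiff q p)) (pdiff q p)) p) = r"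
    if q: "q \<in> policies A" "q \<noteq> p" for q
  proof -
    have "pnorm A (pdiff q p) \<noteq> 0"
      using policies_eq_if_pnorm_eq_0[OF fin q(1) p] q(2) by blast
    then have n: "0 < pnorm A (pdiff q p)"
      using pnorm_nonneg[of A "pdiff q p"] by linarith
    then have "pline p (r / pnorm A (pdiff q p)) (pdiff q p) \<in> policies A"
      using r r_le by (intro policies_pline_extrapolate[OF fin p q(1)]) auto
    then show ?thesis
      unfolding pdiff_pline pnorm_scale using n r by simp
  qed
  with r show ?thesis
    by (rule that)
qed

lemma quad_form_le_on_policy_sphere:
  fixes A :: "'i::finite \<Rightarrow> 'a set" and p :: "'i \<Rightarrow> 's::finite \<Rightarrow> 'a \<Rightarrow> real"
  assumes fin: "\<And>i. finite (A i)" and neg: "\<forall>q\<in>policies A - {p}. quad_form A C (pdiff q p) < 0"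
    and "0 < r"
  shows "\<exists>m>0. \<forall>q\<in>policies A. pnorm A (pdiff q p) = r \<longrightarrow> quad_form A C (pdiff q p) \<le> - m * r\<^sup>2"
proof (cases "\<exists>q\<in>policies A. pnorm A (pdiff q p) = r")
  case False
  then show ?thesis
    by (intro exI[of _ 1]) auto
next
  case True
  define S where "S = {f :: 'i \<times> 's \<times> 'a \<Rightarrow> real.
    (\<lambda>i s b. f (i, s, b)) \<in> policies A \<and> pnorm A (pdiff (\<lambda>i s b. f (i, s, b)) p) = r}"
  have in_S: "(\<lambda>(i, s, b). q i s b) \<in> S" if "q \<in> policies A" "pnorm A (pdiff q p) = r" for q
    using that by (simp add: S_def)
  have "compact S"
    unfolding S_def by (rule compact_policy_sphere[OF fin])
  have "S \<noteq> {}"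
    using True in_S by blast
  have coord: "continuous_on UNIV (\<lambda>f::'i \<times> 's \<times> 'a \<Rightarrow> real. f k)" for k
    by simp
  have "continuous_on UNIV (\<lambda>f. quad_form A C (pdiff (\<lambda>i s b. f (i, s, b)) p))"
    unfolding quad_form_def pdiff_def by (intro continuous_intros coord)
  from continuous_attains_sup[OF \<open>compact S\<close> \<open>S \<noteq> {}\<close> continuous_on_subset[OF this subset_UNIV]]
  obtain f0 where f0: "f0 \<in> S"
    and max: "\<And>f. f \<in> S \<Longrightarrow> quad_form A C (pdiff (\<lambda>i s b. f (i, s, b)) p)
                \<le> quad_form A C (pdiff (\<lambda>i s b. f0 (i, s, b)) p)"
    by blast
  define m where "m = - quad_form A C (pdiff (\<lambda>i s b. f0 (i, s, b)) p) / r\<^sup>2"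
  have "(\<lambda>i s b. f0 (i, s, b)) \<in> policies A - {p}"
    using f0 \<open>0 < r\<close> by (auto simp: S_def)
  then have "0 < m"
    using neg \<open>0 < r\<close> by (simp add: m_def divide_neg_pos)
  moreover have "quad_form A C (pdiff q p) \<le> - m * r\<^sup>2"
    if "q \<in> policies A" "pnorm A (pdiff q p) = r" for q
    using max[OF in_S[OF that]] \<open>0 < r\<close> by (simp add: m_def)
  ultimately show ?thesis
    by blast
qed

text \<open>A quadratic form negative on the cone of feasible directions at \<open>p\<close> is uniformly negative
  there: by homogeneity it suffices to look at the compact slice of feasible points at a fixed small
  distance from \<open>p\<close>, which meets every feasible ray.\<close>

lemma quad_form_le_neg_pnorm_sq:
  fixes A :: "'i::finite \<Rightarrow> 'a set" and p :: "'i \<Rightarrow> 's::finite \<Rightarrow> 'a \<Rightarrow> real"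
  assumes fin: "\<And>i. finite (A i)" and p: "p \<in> policies A"
    and neg: "\<forall>q\<in>policies A - {p}. quad_form A C (pdiff q p) < 0"
  shows "\<exists>m>0. \<forall>q\<in>policies A. quad_form A C (pdiff q p) \<le> - m * (pnorm A (pdiff q p))\<^sup>2"
proof -
  obtain r where r: "0 < r" and to_sphere: "\<And>q. q \<in> policies A \<Longrightarrow> q \<noteq> p \<Longrightarrow>
      pline p (r / pnorm A (pdiff q p)) (pdiff q p) \<in> policies A \<and>
      pnorm A (pdiff (pline p (r / pnorm A (pdiff q p)) (pdiff q p)) p) = r"
    by (fact policies_ray_meets_sphere[OF fin p])
  obtain m where "0 < m"
    and sphere: "\<forall>q\<in>policies A. pnorm A (pdiff q p) = r \<longrightarrow> quad_form A C (pdiff q p) \<le> - m * r\<^sup>2"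
    using quad_form_le_on_policy_sphere[OF fin neg r] by blast
  have bound: "quad_form A C (pdiff q p) \<le> - m * (pnorm A (pdiff q p))\<^sup>2"
    if q: "q \<in> policies A" "q \<noteq> p" for q
  proof -
    define n where "n = pnorm A (pdiff q p)"
    define t where "t = r / n"
    have "0 < n"
      using to_sphere[OF q] r pnorm_nonneg[of A "pdiff q p"] by (cases "n = 0") (auto simp: n_def)
    then have r_eq: "r = t * n" and "0 < t"
      using r by (simp_all add: t_def)
    have "pline p t (pdiff q p) \<in> policies A" "pnorm A (pdiff (pline p t (pdiff q p)) p) = r"
      using to_sphere[OF q] by (simp_all add: t_def n_def)
    then have "quad_form A C (pdiff (pline p t (pdiff q p)) p) \<le> - m * r\<^sup>2"
      using sphere by blast
    then have "t\<^sup>2 * quad_form A C (pdiff q p) \<le> - m * r\<^sup>2"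
      by (simp add: pdiff_pline quad_form_scale)
    also have "\<dots> = t\<^sup>2 * (- m * n\<^sup>2)"
      by (simp add: r_eq power_mult_distrib)
    finally show ?thesis
      unfolding n_def by (rule mult_left_le_imp_le) (use \<open>0 < t\<close> in force)
  qed
  show ?thesis
  proof (intro exI[of _ m] conjI ballI \<open>0 < m\<close>)
    fix q :: "'i \<Rightarrow> 's \<Rightarrow> 'a \<Rightarrow> real" assume "q \<in> policies A"
    then show "quad_form A C (pdiff q p) \<le> - m * (pnorm A (pdiff q p))\<^sup>2"
      using bound by (cases "q = p") auto
  qed
qed

subsection \<open>Strict equilibria\<close>

lemma pure_strategy_gap_bound:
  fixes X qr pr :: "'a \<Rightarrow> real"
  assumes B: "finite B" "bs \<in> B" and q0: "\<forall>c\<in>B. 0 \<le> qr c" and q1: "(\<Sum>c\<in>B. qr c) = 1"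
    and pr: "\<forall>c\<in>B. pr c = (if c = bs then 1 else 0)"
    and gap: "\<forall>c\<in>B. c \<noteq> bs \<longrightarrow> X c - X bs \<le> - c0" and c0: "0 \<le> c0"
  shows "(\<Sum>c\<in>B. X c * (qr c - pr c)) \<le> - (c0 / 2) * (\<Sum>c\<in>B. \<bar>qr c - pr c\<bar>)"
proof -
  define w where "w c = (if c = bs then 0 else qr c)" for c
  have qbs: "qr bs \<le> 1"
  proof -
    have "qr bs \<le> (\<Sum>c\<in>B. qr c)" using B q0 by (intro member_le_sum) auto
    then show ?thesis using q1 by simp
  qed
  have sumd: "(\<Sum>c\<in>B. qr c - pr c) = 0"
    using q1 pr B by (simp add: sum_subtractf sum.cong[of B B pr "\<lambda>c. if c = bs then 1 else 0"] sum.delta')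
  have W: "(\<Sum>c\<in>B. w c) = 1 - qr bs"
  proof -
    have "(\<Sum>c\<in>B. qr c) = (\<Sum>c\<in>B. w c) + (\<Sum>c\<in>B. if c = bs then qr c else 0)"
      unfolding w_def sum.distrib[symmetric] by (intro sum.cong refl) simp
    then show ?thesis using q1 B by (simp add: sum.delta')
  qed
  have "(\<Sum>c\<in>B. X c * (qr c - pr c)) = (\<Sum>c\<in>B. X c * (qr c - pr c)) - X bs * (\<Sum>c\<in>B. qr c - pr c)"
    using sumd by simp
  also have "\<dots> = (\<Sum>c\<in>B. X c * (qr c - pr c)) - (\<Sum>c\<in>B. X bs * (qr c - pr c))"
    by (simp add: sum_distrib_left)
  also have "\<dots> = (\<Sum>c\<in>B. (X c - X bs) * (qr c - pr c))"
    by (simp add: left_diff_distrib sum_subtractf sum_distrib_left)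
  also have "\<dots> \<le> (\<Sum>c\<in>B. - c0 * w c)"
  proof (intro sum_mono)
    fix c assume c: "c \<in> B"
    show "(X c - X bs) * (qr c - pr c) \<le> - c0 * w c"
    proof (cases "c = bs")
      case True then show ?thesis by (simp add: w_def)
    next
      case False
      then have "(X c - X bs) * qr c \<le> - c0 * qr c"
        using gap c q0 by (intro mult_right_mono) auto
      then show ?thesis using False pr c by (simp add: w_def)
    qed
  qed
  also have "\<dots> = - c0 * (1 - qr bs)" unfolding sum_distrib_left[symmetric] W ..
  also have "\<dots> = - (c0 / 2) * (\<Sum>c\<in>B. \<bar>qr c - pr c\<bar>)"
  proof -
    have "(\<Sum>c\<in>B. \<bar>qr c - pr c\<bar>) = (\<Sum>c\<in>B. w c + (if c = bs then 1 - qr bs else 0))"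
    proof (intro sum.cong refl)
      fix c assume c: "c \<in> B"
      show "\<bar>qr c - pr c\<bar> = w c + (if c = bs then 1 - qr bs else 0)"
        using pr c q0 qbs by (cases "c = bs") (auto simp: w_def)
    qed
    also have "\<dots> = 2 * (1 - qr bs)" using W B by (simp add: sum.distrib sum.delta')
    finally show ?thesis by simp
  qed
  finally show ?thesis .
qed

text \<open>Compare \<open>p\<close> with the profile that deviates to \<open>b\<close> in state \<open>s\<close> only.\<close>

lemma strict_imp_gradient_gap:
  fixes A :: "'i::finite \<Rightarrow> 'a set" and p :: "'i \<Rightarrow> 's::finite \<Rightarrow> 'a \<Rightarrow> real"
  assumes fin: "\<And>i. finite (A i)" and p: "p \<in> policies A"
    and bs: "bs \<in> A i" "\<And>c. c \<in> A i \<Longrightarrow> p i s c = (if c = bs then 1 else 0)"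
    and strict: "\<forall>q\<in>policies A - {p}. pinner A X (pdiff q p) < 0"
    and b: "b \<in> A i" "b \<noteq> bs"
  shows "X i s b < X i s bs"
proof -
  define q where "q = p(i := (p i)(s := (\<lambda>c. if c = b then 1 else (0::real))))"
  have "q \<in> policies A"
    using p b fin unfolding q_def policies_def by (auto simp: sum.delta')
  moreover have "q \<noteq> p"
    using bs(2)[OF b(1)] b(2) unfolding q_def by (auto simp: fun_eq_iff)
  moreover have "pdiff q p = (\<lambda>j s' c. if j = i \<and> s' = s then (if c = b then 1 else 0) - p i s c else 0)"
    unfolding q_def pdiff_def by (intro ext) auto
  then have "pinner A X (pdiff q p) = (\<Sum>c\<in>A i. X i s c * ((if c = b then 1 else 0) - p i s c))"
    by (simp add: pinner_block)
  moreover have "\<dots> = (\<Sum>c\<in>A i. if c = b then X i s c else 0) - (\<Sum>c\<in>A i. if c = bs then X i s c else 0)"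
    unfolding sum_subtractf[symmetric] by (intro sum.cong refl) (auto simp: bs(2) right_diff_distrib)
  moreover have "\<dots> = X i s b - X i s bs"
    using b bs(1) fin by (simp add: sum.delta')
  ultimately show ?thesis
    using strict by force
qed

lemma pinner_le_neg_pnorm1_of_gap:
  fixes A :: "'i::finite \<Rightarrow> 'a set" and p q :: "'i \<Rightarrow> 's::finite \<Rightarrow> 'a \<Rightarrow> real"
  assumes fin: "\<And>i. finite (A i)" and q: "q \<in> policies A"
    and bs: "\<And>i s. bs i s \<in> A i" "\<And>i s c. c \<in> A i \<Longrightarrow> p i s c = (if c = bs i s then 1 else 0)"
    and gap: "\<And>i s b. b \<in> A i \<Longrightarrow> b \<noteq> bs i s \<Longrightarrow> X i s b - X i s (bs i s) \<le> - c"
    and "0 \<le> c"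
  shows "pinner A X (pdiff q p) \<le> - (c / 2) * pnorm1 A (pdiff q p)"
proof -
  have "pinner A X (pdiff q p) \<le> (\<Sum>i\<in>UNIV. \<Sum>s\<in>UNIV. - (c / 2) * (\<Sum>b\<in>A i. \<bar>pdiff q p i s b\<bar>))"
    unfolding pinner_def
  proof (intro sum_mono)
    fix i s
    show "(\<Sum>b\<in>A i. X i s b * pdiff q p i s b) \<le> - (c / 2) * (\<Sum>b\<in>A i. \<bar>pdiff q p i s b\<bar>)"
      unfolding pdiff_def
      by (rule pure_strategy_gap_bound[OF fin bs(1)]) (use q assms in \<open>auto simp: policies_def\<close>)
  qed
  also have "\<dots> = - (c / 2) * pnorm1 A (pdiff q p)"
    unfolding pnorm1_def by (simp add: sum_distrib_left)
  finally show ?thesis .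
qed

lemma strict_local_bound:
  fixes A :: "'i::finite \<Rightarrow> 'a set" and p :: "'i \<Rightarrow> 's::finite \<Rightarrow> 'a \<Rightarrow> real"
    and v :: "'i \<Rightarrow> 's \<Rightarrow> 'a \<Rightarrow> ('i \<Rightarrow> 's \<Rightarrow> 'a \<Rightarrow> real) \<Rightarrow> real"
  assumes fin: "\<And>i. finite (A i)" and p: "p \<in> policies A"
    and pure: "\<forall>i s. \<exists>b\<in>A i. \<forall>c\<in>A i. p i s c = (if c = b then 1 else 0)"
    and strict: "\<forall>q\<in>policies A - {p}. pinner A (\<lambda>i s b. v i s b p) (pdiff q p) < 0"
    and cont: "\<And>i s b. b \<in> A i \<Longrightarrow> (v i s b \<longlongrightarrow> v i s b p) (pnhds A p)"
  shows "\<exists>mu>0. \<exists>delta>0. \<forall>q\<in>policies A. pnorm A (pdiff q p) < delta \<longrightarrow>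
            pinner A (\<lambda>i s b. v i s b q) (pdiff q p) \<le> - mu * pnorm A (pdiff q p)"
proof -
  obtain bs where bs: "\<And>i s. bs i s \<in> A i"
    "\<And>i s c. c \<in> A i \<Longrightarrow> p i s c = (if c = bs i s then 1 else 0)"
    using pure by metis
  define vp where "vp i s b = v i s b p" for i s b
  define Gaps where
    "Gaps = (\<lambda>(i, s, b). vp i s (bs i s) - vp i s b) ` {(i, s, b) \<in> coords A. b \<noteq> bs i s}"
  have "finite (coords A :: ('i \<times> 's \<times> 'a) set)"
    by (rule finite_coords[OF fin])
  then have "finite Gaps"
    unfolding Gaps_def by (rule finite_imageI[OF finite_subset, rotated]) auto
  define c where "c = Min (insert 1 Gaps)"
  have "0 < c"
    unfolding c_def using \<open>finite Gaps\<close> strict_imp_gradient_gap[OF fin p bs strict]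
    by (auto simp: Gaps_def vp_def)
  have gap: "vp i s b - vp i s (bs i s) \<le> - c" if "b \<in> A i" "b \<noteq> bs i s" for i s b
  proof -
    have "c \<le> vp i s (bs i s) - vp i s b"
      unfolding c_def using \<open>finite Gaps\<close> that by (intro Min_le) (auto simp: Gaps_def image_iff)
    then show ?thesis
      by simp
  qed
  have "eventually (\<lambda>y. \<forall>i s. \<forall>b\<in>A i. \<bar>v i s b y - vp i s b\<bar> < c / 4) (pnhds A p)"
    using \<open>0 < c\<close> unfolding vp_def
    by (intro eventually_forall_coords[OF fin] eventually_pnhds_dist_less cont) auto
  then obtain delta where "0 < delta"
    and close: "\<And>y. pnorm A (pdiff y p) < delta \<Longrightarrow>
      \<forall>i s. \<forall>b\<in>A i. \<bar>v i s b y - vp i s b\<bar> < c / 4"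
    unfolding eventually_pnhds_iff by blast
  have "pinner A (\<lambda>i s b. v i s b q) (pdiff q p) \<le> - (c / 4) * pnorm A (pdiff q p)"
    if q: "q \<in> policies A" and small: "pnorm A (pdiff q p) < delta" for q
  proof -
    have "pinner A (\<lambda>i s b. v i s b q) (pdiff q p)
        = pinner A vp (pdiff q p) + pinner A (\<lambda>i s b. v i s b q - vp i s b) (pdiff q p)"
      using pinner_diff_left[of A "\<lambda>i s b. v i s b q" "pdiff q p" vp] by simp
    also have "\<dots> \<le> - (c / 2) * pnorm1 A (pdiff q p) + c / 4 * pnorm1 A (pdiff q p)"
      using pinner_le_neg_pnorm1_of_gap[where X=vp, OF fin q bs gap] \<open>0 < c\<close>
        pinner_le_pnorm1[of A "\<lambda>i s b. v i s b q - vp i s b" "c / 4" "pdiff q p"] close[OF small]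
      by (force intro: add_mono less_imp_le)
    also have "\<dots> \<le> - (c / 4) * pnorm A (pdiff q p)"
      using pnorm_le_pnorm1[where d="pdiff q p", OF fin] \<open>0 < c\<close> by simp
    finally show ?thesis .
  qed
  then show ?thesis
    using \<open>0 < c\<close> \<open>0 < delta\<close> by (intro exI[of _ "c / 4"] exI[of _ delta]) auto
qed

subsection \<open>Second-order stationary equilibria\<close>

lemma quad_form_le_pnorm_sq:
  fixes A :: "'i::finite \<Rightarrow> 'a set" and d :: "'i \<Rightarrow> 's::finite \<Rightarrow> 'a \<Rightarrow> real"
  assumes fin: "\<And>i. finite (A i)" and "0 \<le> e"
    and "\<And>i s b j s' c. b \<in> A i \<Longrightarrow> c \<in> A j \<Longrightarrow> \<bar>E i s b j s' c\<bar> \<le> e"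
  shows "quad_form A E d \<le> e * card (coords A :: ('i \<times> 's \<times> 'a) set) * (pnorm A d)\<^sup>2"
proof -
  define N where "N = real (card (coords A :: ('i \<times> 's \<times> 'a) set))"
  have "pnorm1 A d * pnorm1 A d \<le> (sqrt N * pnorm A d) * (sqrt N * pnorm A d)"
    using pnorm1_le_sqrt_card_pnorm[of A d, OF fin] pnorm1_nonneg[of A d]
    unfolding N_def by (intro mult_mono) auto
  also have "\<dots> = N * (pnorm A d)\<^sup>2"
    by (simp add: N_def power2_eq_square mult_ac)
  finally have "e * (pnorm1 A d * pnorm1 A d) \<le> e * (N * (pnorm A d)\<^sup>2)"
    using \<open>0 \<le> e\<close> by (rule mult_left_mono)
  then show ?thesis
    using quad_form_le_pnorm1[of A E e d] assms(3) by (simp add: N_def mult.assoc)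
qed

lemma pinner_mean_value:
  fixes A :: "'i::finite \<Rightarrow> 'a set" and p q :: "'i \<Rightarrow> 's::finite \<Rightarrow> 'a \<Rightarrow> real"
  assumes U: "policies A \<subseteq> U" and D: "\<And>i s b. b \<in> A i \<Longrightarrow> has_pgrad A U (v i s b) (H i s b)"
    and p: "p \<in> policies A" and q: "q \<in> policies A"
  obtains t where "0 < t" "t < 1"
    "pinner A (\<lambda>i s b. v i s b q) (pdiff q p) = pinner A (\<lambda>i s b. v i s b p) (pdiff q p)
       + quad_form A (\<lambda>i s b j s' c. H i s b j s' c (pline p t (pdiff q p))) (pdiff q p)"
proof -
  define d where "d = pdiff q p"
  define \<phi> where "\<phi> u = (\<Sum>i\<in>UNIV. \<Sum>s\<in>UNIV. \<Sum>b\<in>A i. v i s b (pline p u d) * d i s b)" for u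
  define \<phi>' where "\<phi>' u = quad_form A (\<lambda>i s b j s' c. H i s b j s' c (pline p u d)) d" for u
  have "DERIV \<phi> u :> \<phi>' u" if "0 \<le> u" "u \<le> 1" for u
  proof -
    have "pline p u d \<in> U"
      using policies_convex[OF p q that] U unfolding d_def by blast
    then have "DERIV \<phi> u :> (\<Sum>i\<in>UNIV. \<Sum>s\<in>UNIV. \<Sum>b\<in>A i.
        pinner A d (\<lambda>j s' c. H i s b j s' c (pline p u d)) * d i s b)"
      unfolding \<phi>_def by (intro DERIV_sum DERIV_cmult_right has_pgrad_DERIV_along_line[OF D])
    also have "(\<Sum>i\<in>UNIV. \<Sum>s\<in>UNIV. \<Sum>b\<in>A i. pinner A d (\<lambda>j s' c. H i s b j s' c (pline p u d)) * d i s b)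
        = \<phi>' u"
      unfolding \<phi>'_def quad_form_def pinner_def by (simp add: sum_distrib_right sum_distrib_left mult_ac)
    finally show ?thesis .
  qed
  then obtain t where "0 < t" "t < 1" "\<phi> 1 - \<phi> 0 = (1 - 0) * \<phi>' t"
    using MVT2[of 0 1 \<phi> \<phi>'] by auto
  then show ?thesis
    by (intro that[of t]) (auto simp: \<phi>_def \<phi>'_def d_def pinner_def)
qed

text \<open>The mean value theorem along the segment from \<open>p\<close> to \<open>q\<close> splits the inner product into the
  first-order term (nonpositive at a Nash policy), the Jacobian term (\<open>\<le> -m |q - p|\<^sup>2\<close>), and an error
  that continuity of the Jacobian makes \<open>\<le> m/2 |q - p|\<^sup>2\<close> near \<open>p\<close>.\<close>

lemma sos_local_bound:
  fixes A :: "'i::finite \<Rightarrow> 'a set" and p :: "'i \<Rightarrow> 's::finite \<Rightarrow> 'a \<Rightarrow> real"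
    and v :: "'i \<Rightarrow> 's \<Rightarrow> 'a \<Rightarrow> ('i \<Rightarrow> 's \<Rightarrow> 'a \<Rightarrow> real) \<Rightarrow> real"
    and H :: "'i \<Rightarrow> 's \<Rightarrow> 'a \<Rightarrow> 'i \<Rightarrow> 's \<Rightarrow> 'a \<Rightarrow> ('i \<Rightarrow> 's \<Rightarrow> 'a \<Rightarrow> real) \<Rightarrow> real"
  assumes fin: "\<And>i. finite (A i)" and p: "p \<in> policies A" and U: "policies A \<subseteq> U"
    and D: "\<And>i s b. b \<in> A i \<Longrightarrow> has_pgrad A U (v i s b) (H i s b)"
    and cont: "\<And>i s b j s' c. b \<in> A i \<Longrightarrow> c \<in> A j \<Longrightarrow> (H i s b j s' c \<longlongrightarrow> H i s b j s' c p) (pnhds A p)"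
    and first_order: "\<forall>q\<in>policies A. pinner A (\<lambda>i s b. v i s b p) (pdiff q p) \<le> 0"
    and "0 < m"
    and quad: "\<forall>q\<in>policies A.
      quad_form A (\<lambda>i s b j s' c. H i s b j s' c p) (pdiff q p) \<le> - m * (pnorm A (pdiff q p))\<^sup>2"
  shows "\<exists>mu>0. \<exists>delta>0. \<forall>q\<in>policies A. pnorm A (pdiff q p) < delta \<longrightarrow>
            pinner A (\<lambda>i s b. v i s b q) (pdiff q p) \<le> - mu * (pnorm A (pdiff q p))\<^sup>2"
proof -
  define N where "N = real (card (coords A :: ('i \<times> 's \<times> 'a) set))"
  define eps where "eps = m / (2 * (N + 1))"
  have "0 < eps"
    using \<open>0 < m\<close> by (simp add: eps_def N_def add_pos_nonneg)
  have "eps * N \<le> m / 2"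
    using \<open>0 < m\<close> by (simp add: eps_def N_def field_simps)
  have "eventually (\<lambda>y. \<forall>i s. \<forall>b\<in>A i. \<forall>j s'. \<forall>c\<in>A j.
      \<bar>H i s b j s' c y - H i s b j s' c p\<bar> < eps) (pnhds A p)"
    using \<open>0 < eps\<close>
    by (intro eventually_forall_coords[OF fin] eventually_pnhds_dist_less cont) auto
  then obtain delta where "0 < delta"
    and close: "\<And>y. pnorm A (pdiff y p) < delta \<Longrightarrow>
      \<forall>i s. \<forall>b\<in>A i. \<forall>j s'. \<forall>c\<in>A j. \<bar>H i s b j s' c y - H i s b j s' c p\<bar> < eps"
    unfolding eventually_pnhds_iff by blast
  have "pinner A (\<lambda>i s b. v i s b q) (pdiff q p) \<le> - (m / 2) * (pnorm A (pdiff q p))\<^sup>2"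
    if q: "q \<in> policies A" and small: "pnorm A (pdiff q p) < delta" for q
  proof -
    define d where "d = pdiff q p"
    obtain t where t: "0 < t" "t < 1" and mvt:
      "pinner A (\<lambda>i s b. v i s b q) d = pinner A (\<lambda>i s b. v i s b p) d
         + quad_form A (\<lambda>i s b j s' c. H i s b j s' c (pline p t d)) d"
      using pinner_mean_value[where U=U and v=v and H=H, OF U D p q] unfolding d_def by blast
    have "pnorm A (pdiff (pline p t d) p) = t * pnorm A d"
      using t by (simp add: pdiff_pline pnorm_scale)
    also have "\<dots> < delta"
      using mult_left_le_one_le[OF pnorm_nonneg[of A d], of t] t small unfolding d_def by linarith
    finally have "quad_form A (\<lambda>i s b j s' c. H i s b j s' c (pline p t d) - H i s b j s' c p) d
        \<le> eps * N * (pnorm A d)\<^sup>2"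
      unfolding N_def using close \<open>0 < eps\<close>
      by (intro quad_form_le_pnorm_sq[OF fin]) (auto intro: less_imp_le)
    also have "\<dots> \<le> m / 2 * (pnorm A d)\<^sup>2"
      using \<open>eps * N \<le> m / 2\<close> by (rule mult_right_mono) simp
    finally have "quad_form A (\<lambda>i s b j s' c. H i s b j s' c (pline p t d)) d
        \<le> quad_form A (\<lambda>i s b j s' c. H i s b j s' c p) d + m / 2 * (pnorm A d)\<^sup>2"
      unfolding quad_form_diff[symmetric] by simp
    then show ?thesis
      using mvt first_order quad q unfolding d_def by fastforce
  qed
  then show ?thesis
    using \<open>0 < m\<close> \<open>0 < delta\<close> by (intro exI[of _ "m / 2"] exI[of _ delta]) auto
qed

section \<open>The value of a profile\<close>

definition trans_mat :: "('i::finite \<Rightarrow> 'a set) \<Rightarrow> ('s::finite \<Rightarrow> ('i \<Rightarrow> 'a) \<Rightarrow> 's \<Rightarrow> real)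
   \<Rightarrow> ('i \<Rightarrow> 's \<Rightarrow> 'a \<Rightarrow> real) \<Rightarrow> 's \<Rightarrow> 's \<Rightarrow> real" where
  "trans_mat A P q s s' = (\<Sum>a\<in>joint_actions A. jointp q s a * P s a s')"

definition exp_reward :: "('i::finite \<Rightarrow> 'a set) \<Rightarrow> ('i \<Rightarrow> 's \<Rightarrow> ('i \<Rightarrow> 'a) \<Rightarrow> real)
   \<Rightarrow> ('i \<Rightarrow> 's \<Rightarrow> 'a \<Rightarrow> real) \<Rightarrow> 'i \<Rightarrow> 's \<Rightarrow> real" where
  "exp_reward A r q i s = (\<Sum>a\<in>joint_actions A. jointp q s a * r i s a)"

definition resolvent :: "('i::finite \<Rightarrow> 'a set) \<Rightarrow> ('s::finite \<Rightarrow> ('i \<Rightarrow> 'a) \<Rightarrow> 's \<Rightarrow> real)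
   \<Rightarrow> ('i \<Rightarrow> 's \<Rightarrow> 'a \<Rightarrow> real) \<Rightarrow> real^'s^'s" where
  "resolvent A P q = (\<chi> s s'. (if s = s' then 1 else 0) - trans_mat A P q s s')"

definition value_cramer :: "('i::finite \<Rightarrow> 'a set) \<Rightarrow> ('s::finite \<Rightarrow> ('i \<Rightarrow> 'a) \<Rightarrow> 's \<Rightarrow> real)
   \<Rightarrow> ('i \<Rightarrow> 's \<Rightarrow> ('i \<Rightarrow> 'a) \<Rightarrow> real) \<Rightarrow> 'i \<Rightarrow> ('i \<Rightarrow> 's \<Rightarrow> 'a \<Rightarrow> real) \<Rightarrow> 's \<Rightarrow> real" where
  "value_cramer A P r i q k =
     det (\<chi> s s'. if s' = k then exp_reward A r q i s else resolvent A P q $ s $ s')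
       * inverse (det (resolvent A P q))"

definition value_rational :: "('i::finite \<Rightarrow> 'a set) \<Rightarrow> ('s::finite \<Rightarrow> ('i \<Rightarrow> 'a) \<Rightarrow> 's \<Rightarrow> real)
   \<Rightarrow> ('i \<Rightarrow> 's \<Rightarrow> ('i \<Rightarrow> 'a) \<Rightarrow> real) \<Rightarrow> ('s \<Rightarrow> real) \<Rightarrow> 'i \<Rightarrow> ('i \<Rightarrow> 's \<Rightarrow> 'a \<Rightarrow> real) \<Rightarrow> real" where
  "value_rational A P r rho i q = (\<Sum>s\<in>UNIV. rho s * value_cramer A P r i q s)"

lemma rational_on_jointp: "a \<in> joint_actions A \<Longrightarrow> rational_on A U (\<lambda>q. jointp q s a)"
  unfolding jointp_def joint_actions_def
  by (rule rational_on_prod) (auto intro: rational_on_coord)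

lemma rational_on_trans_mat: "rational_on A U (\<lambda>q. trans_mat A P q s s')"
  unfolding trans_mat_def
  by (rule rational_on_sum) (auto intro: rational_on_mult rational_on_jointp rational_on_const)

lemma rational_on_exp_reward: "rational_on A U (\<lambda>q. exp_reward A r q i s)"
  unfolding exp_reward_def
  by (rule rational_on_sum) (auto intro: rational_on_mult rational_on_jointp rational_on_const)

lemma rational_on_resolvent: "rational_on A U (\<lambda>q. resolvent A P q $ s $ s')"
  unfolding resolvent_def by (simp add: rational_on_diff rational_on_const rational_on_trans_mat)

lemma rational_on_det_resolvent: "rational_on A U (\<lambda>q. det (resolvent A P q))"
proof -
  have "rational_on A U (\<lambda>q. det (\<chi> s s'. resolvent A P q $ s $ s'))"
    by (rule rational_on_det) (rule rational_on_resolvent)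
  then show ?thesis
    by (simp add: vec_lambda_eta)
qed

lemma rational_on_value_rational:
  assumes "\<forall>q\<in>U. det (resolvent A P q) \<noteq> 0"
  shows "rational_on A U (value_rational A P r rho i)"
proof -
  have "rational_on A U (\<lambda>q. value_rational A P r rho i q)"
    unfolding value_rational_def value_cramer_def
    by (intro rational_on_sum rational_on_mult rational_on_const rational_on_inverse rational_on_det
        rational_on_if rational_on_exp_reward rational_on_resolvent rational_on_det_resolvent)
      (use assms in auto)
  then show ?thesis
    by simp
qed

locale stopping_game =
  fixes A :: "'i::finite \<Rightarrow> 'a set" and P :: "'s::finite \<Rightarrow> ('i \<Rightarrow> 'a) \<Rightarrow> 's \<Rightarrow> real"
    and zeta kap :: real
  assumes A_fin: "\<And>i. finite (A i)" and A_ne: "\<And>i. A i \<noteq> {}"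
    and P_nonneg: "\<And>s a s'. a \<in> joint_actions A \<Longrightarrow> 0 \<le> P s a s'"
    and stop: "\<And>s a. a \<in> joint_actions A \<Longrightarrow> 1 - (\<Sum>s'\<in>UNIV. P s a s') \<ge> zeta"
    and kap_gt_1: "1 < kap" and kap_small: "(1 - zeta) * kap ^ CARD('i) < 1"
begin

definition nbhd :: "('i \<Rightarrow> 's \<Rightarrow> 'a \<Rightarrow> real) set" where
  "nbhd = {q. \<forall>i s. (\<Sum>b\<in>A i. \<bar>q i s b\<bar>) < kap}"

definition contraction :: real where
  "contraction = (1 - zeta) * kap ^ CARD('i)"

lemma joint_actions_nonempty: "joint_actions A \<noteq> {}"
  unfolding joint_actions_def using A_ne by (simp add: PiE_eq_empty_iff)

lemma zeta_le_1: "zeta \<le> 1"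
proof -
  obtain a where a: "a \<in> joint_actions A"
    using joint_actions_nonempty by blast
  have "0 \<le> (\<Sum>s'\<in>UNIV. P (undefined::'s) a s')"
    using P_nonneg[OF a] by (intro sum_nonneg) auto
  with stop[OF a, of undefined] show ?thesis
    by linarith
qed

lemma contraction_nonneg: "0 \<le> contraction"
  unfolding contraction_def using zeta_le_1 kap_gt_1 by simp

lemma contraction_less_1: "contraction < 1"
  unfolding contraction_def using kap_small .

lemma sum_abs_jointp_le:
  assumes q: "q \<in> nbhd"
  shows "(\<Sum>a\<in>joint_actions A. \<bar>jointp q s a\<bar>) \<le> kap ^ CARD('i)"
proof -
  have "(\<Sum>a\<in>joint_actions A. \<bar>jointp q s a\<bar>) = (\<Sum>a\<in>PiE UNIV A. \<Prod>i\<in>UNIV. \<bar>q i s (a i)\<bar>)"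
    unfolding joint_actions_def jointp_def by (simp add: abs_prod)
  also have "\<dots> = (\<Prod>i\<in>UNIV. \<Sum>b\<in>A i. \<bar>q i s b\<bar>)"
    by (rule prod_sum_PiE[symmetric]) (auto simp: A_fin)
  also have "\<dots> \<le> (\<Prod>i\<in>(UNIV::'i set). kap)"
    using q unfolding nbhd_def by (intro prod_mono) (auto intro: sum_nonneg less_imp_le)
  also have "\<dots> = kap ^ CARD('i)" by simp
  finally show ?thesis .
qed

lemma sum_abs_trans_mat_le:
  assumes q: "q \<in> nbhd"
  shows "(\<Sum>s'\<in>UNIV. \<bar>trans_mat A P q s s'\<bar>) \<le> contraction"
proof -
  have "(\<Sum>s'\<in>UNIV. \<bar>trans_mat A P q s s'\<bar>)
      \<le> (\<Sum>s'\<in>UNIV. \<Sum>a\<in>joint_actions A. \<bar>jointp q s a\<bar> * P s a s')"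
  proof (intro sum_mono)
    fix s'
    have "\<bar>trans_mat A P q s s'\<bar> \<le> (\<Sum>a\<in>joint_actions A. \<bar>jointp q s a * P s a s'\<bar>)"
      unfolding trans_mat_def by (rule sum_abs)
    also have "\<dots> = (\<Sum>a\<in>joint_actions A. \<bar>jointp q s a\<bar> * P s a s')"
      by (intro sum.cong refl) (simp add: abs_mult P_nonneg)
    finally show "\<bar>trans_mat A P q s s'\<bar> \<le> (\<Sum>a\<in>joint_actions A. \<bar>jointp q s a\<bar> * P s a s')" .
  qed
  also have "\<dots> = (\<Sum>a\<in>joint_actions A. \<bar>jointp q s a\<bar> * (\<Sum>s'\<in>UNIV. P s a s'))"
    by (simp add: sum.swap[of _ UNIV] sum_distrib_left)
  also have "\<dots> \<le> (\<Sum>a\<in>joint_actions A. \<bar>jointp q s a\<bar> * (1 - zeta))"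
  proof (intro sum_mono mult_left_mono)
    fix a assume "a \<in> joint_actions A"
    from stop[OF this, of s] show "(\<Sum>s'\<in>UNIV. P s a s') \<le> 1 - zeta"
      by linarith
  qed simp
  also have "\<dots> = (\<Sum>a\<in>joint_actions A. \<bar>jointp q s a\<bar>) * (1 - zeta)"
    by (simp add: sum_distrib_right)
  also have "\<dots> \<le> kap ^ CARD('i) * (1 - zeta)"
    by (rule mult_right_mono[OF sum_abs_jointp_le[OF q]]) (use zeta_le_1 in simp)
  finally show ?thesis
    unfolding contraction_def by (simp add: mult.commute)
qed

lemma resolvent_mult_vec:
  "(resolvent A P q *v x) $ s = x $ s - (\<Sum>s'\<in>UNIV. trans_mat A P q s s' * x $ s')"
proof -
  have "(resolvent A P q *v x) $ s
      = (\<Sum>s'\<in>UNIV. ((if s = s' then 1 else 0) - trans_mat A P q s s') * x $ s')"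
    by (simp add: matrix_vector_mult_def resolvent_def)
  also have "\<dots> = (\<Sum>s'\<in>UNIV. (if s = s' then x $ s' else 0))
      - (\<Sum>s'\<in>UNIV. trans_mat A P q s s' * x $ s')"
    by (simp add: left_diff_distrib sum_subtractf if_distrib[of "\<lambda>u. u * _"] cong: if_cong)
  also have "\<dots> = x $ s - (\<Sum>s'\<in>UNIV. trans_mat A P q s s' * x $ s')"
    by simp
  finally show ?thesis .
qed

lemma resolvent_mult_vec_eq_0:
  assumes q: "q \<in> nbhd" and x: "resolvent A P q *v x = 0"
  shows "x = 0"
proof -
  define m where "m = Max (range (\<lambda>s. \<bar>x $ s\<bar>))"
  have le_m: "\<bar>x $ s\<bar> \<le> m" for s
    unfolding m_def by (rule Max_ge) auto
  have "m \<in> range (\<lambda>s. \<bar>x $ s\<bar>)"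
    unfolding m_def by (rule Max_in) auto
  then obtain s0 where s0: "m = \<bar>x $ s0\<bar>"
    by blast
  have "x $ s0 = (\<Sum>s'\<in>UNIV. trans_mat A P q s0 s' * x $ s')"
    using arg_cong[OF x, of "\<lambda>v. v $ s0"] resolvent_mult_vec[of q x s0] by simp
  then have "m \<le> (\<Sum>s'\<in>UNIV. \<bar>trans_mat A P q s0 s'\<bar> * \<bar>x $ s'\<bar>)"
    unfolding s0 by (simp add: sum_abs[THEN order_trans] abs_mult)
  also have "\<dots> \<le> (\<Sum>s'\<in>UNIV. \<bar>trans_mat A P q s0 s'\<bar>) * m"
    unfolding sum_distrib_right by (intro sum_mono mult_left_mono le_m) auto
  also have "\<dots> \<le> contraction * m"
    using le_m[of s0] s0 by (intro mult_right_mono sum_abs_trans_mat_le[OF q]) auto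
  finally have "m \<le> 0"
    using contraction_less_1 le_m[of s0] s0 by (simp add: mult_le_cancel_right1)
  then show ?thesis
    using le_m by (metis abs_le_zero_iff order_trans vec_eq_iff zero_index)
qed

lemma det_resolvent_nonzero:
  assumes "q \<in> nbhd"
  shows "det (resolvent A P q) \<noteq> 0"
proof -
  have "inj (\<lambda>x. resolvent A P q *v x)"
  proof (rule injI)
    fix x y assume "resolvent A P q *v x = resolvent A P q *v y"
    then have "resolvent A P q *v (x - y) = 0"
      by (simp add: matrix_vector_mult_diff_distrib)
    then show "x = y"
      using resolvent_mult_vec_eq_0[OF assms] by fastforce
  qed
  then show ?thesis
    using det_nz_iff_inj[of "\<lambda>x. resolvent A P q *v x"] by simp
qed

lemma sdist_Suc_trans_mat:
  "sdist A P rho q (Suc t) s' = (\<Sum>s\<in>UNIV. sdist A P rho q t s * trans_mat A P q s s')"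
  by (simp add: trans_mat_def)

lemma sum_abs_sdist_le:
  assumes q: "q \<in> nbhd"
  shows "(\<Sum>s\<in>UNIV. \<bar>sdist A P rho q t s\<bar>) \<le> contraction ^ t * (\<Sum>s\<in>UNIV. \<bar>rho s\<bar>)"
proof (induction t)
  case 0
  then show ?case
    by simp
next
  case (Suc t)
  have "(\<Sum>s'\<in>UNIV. \<bar>sdist A P rho q (Suc t) s'\<bar>)
      \<le> (\<Sum>s'\<in>UNIV. \<Sum>s\<in>UNIV. \<bar>sdist A P rho q t s\<bar> * \<bar>trans_mat A P q s s'\<bar>)"
    unfolding sdist_Suc_trans_mat by (intro sum_mono order_trans[OF sum_abs]) (simp add: abs_mult)
  also have "\<dots> = (\<Sum>s\<in>UNIV. \<bar>sdist A P rho q t s\<bar> * (\<Sum>s'\<in>UNIV. \<bar>trans_mat A P q s s'\<bar>))"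
    unfolding sum_distrib_left by (rule sum.swap)
  also have "\<dots> \<le> (\<Sum>s\<in>UNIV. \<bar>sdist A P rho q t s\<bar> * contraction)"
    by (intro sum_mono mult_left_mono sum_abs_trans_mat_le[OF q]) auto
  also have "\<dots> = contraction * (\<Sum>s\<in>UNIV. \<bar>sdist A P rho q t s\<bar>)"
    by (simp add: sum_distrib_left mult.commute)
  also have "\<dots> \<le> contraction * (contraction ^ t * (\<Sum>s\<in>UNIV. \<bar>rho s\<bar>))"
    by (rule mult_left_mono[OF Suc contraction_nonneg])
  finally show ?case
    by (simp add: mult.assoc)
qed

lemma value_cramer_bellman:
  assumes "q \<in> nbhd"
  shows "value_cramer A P r i q s
    = exp_reward A r q i s + (\<Sum>s'\<in>UNIV. trans_mat A P q s s' * value_cramer A P r i q s')"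
proof -
  define R :: "real^'s" where "R = (\<chi> s. exp_reward A r q i s)"
  have R: "R $ s = exp_reward A r q i s" for s
    by (simp add: R_def)
  have "resolvent A P q *v (\<chi> k. value_cramer A P r i q k) = R"
    unfolding cramer[OF det_resolvent_nonzero[OF assms]] value_cramer_def R
    by (simp add: divide_inverse)
  then show ?thesis
    using resolvent_mult_vec[of q "\<chi> k. value_cramer A P r i q k" s] by (simp add: R_def algebra_simps)
qed

lemma sdist_value_cramer_tendsto_0:
  assumes q: "q \<in> nbhd"
  shows "(\<lambda>t. \<Sum>s\<in>UNIV. sdist A P rho q t s * value_cramer A P r i q s) \<longlonglongrightarrow> 0"
proof (rule Lim_null_comparison)
  define B where "B = (\<Sum>s\<in>UNIV. \<bar>value_cramer A P r i q s\<bar>)"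
  define R where "R = (\<Sum>s\<in>UNIV. \<bar>rho s\<bar>)"
  have "norm (\<Sum>s\<in>UNIV. sdist A P rho q t s * value_cramer A P r i q s)
      \<le> (\<Sum>s\<in>UNIV. \<bar>sdist A P rho q t s\<bar> * B)" for t
    unfolding real_norm_def B_def
    by (rule order_trans[OF sum_abs]) (auto simp: abs_mult intro!: sum_mono mult_left_mono member_le_sum)
  also have "\<dots> t \<le> contraction ^ t * R * B" for t
    unfolding sum_distrib_right[symmetric] R_def
    by (rule mult_right_mono[OF sum_abs_sdist_le[OF q]]) (auto simp: B_def intro: sum_nonneg)
  finally show "eventually (\<lambda>t. norm (\<Sum>s\<in>UNIV. sdist A P rho q t s * value_cramer A P r i q s)
      \<le> contraction ^ t * R * B) sequentially"
    by simp
  show "(\<lambda>t. contraction ^ t * R * B) \<longlonglongrightarrow> 0"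
    using contraction_nonneg contraction_less_1 LIMSEQ_power_zero[of contraction]
    by (auto intro: tendsto_mult_left_zero)
qed

text \<open>By the Bellman equation, the expected reward at time \<open>t\<close> is \<open>a t - a (t + 1)\<close> for
  \<open>a t = \<Sum>s. sdist t s * value_cramer s\<close>, so the series defining \<open>Vval\<close> telescopes.\<close>

lemma Vval_eq_value_rational:
  assumes q: "q \<in> nbhd"
  shows "Vval A P r rho q i = value_rational A P r rho i q"
proof -
  define a where "a t = (\<Sum>s\<in>UNIV. sdist A P rho q t s * value_cramer A P r i q s)" for t
  have "a (Suc t) = (\<Sum>s\<in>UNIV. sdist A P rho q t s *
      (\<Sum>s'\<in>UNIV. trans_mat A P q s s' * value_cramer A P r i q s'))" for t
    unfolding a_def sdist_Suc_trans_mat sum_distrib_right sum_distrib_left mult.assoc by (rule sum.swap)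
  then have "(\<Sum>s\<in>UNIV. sdist A P rho q t s * exp_reward A r q i s) = a t - a (Suc t)" for t
    unfolding a_def by (subst value_cramer_bellman[OF q]) (simp add: distrib_left sum.distrib)
  moreover have "(\<lambda>t. a t - a (Suc t)) sums (a 0 - 0)"
    using sdist_value_cramer_tendsto_0[OF q] unfolding a_def by (rule telescope_sums')
  ultimately show ?thesis
    unfolding Vval_def exp_reward_def[symmetric] by (simp add: sums_iff a_def value_rational_def)
qed

lemma policies_subset_nbhd: "(policies A :: ('i \<Rightarrow> 's \<Rightarrow> 'a \<Rightarrow> real) set) \<subseteq> nbhd"
proof
  fix q :: "'i \<Rightarrow> 's \<Rightarrow> 'a \<Rightarrow> real" assume q: "q \<in> policies A"
  have "(\<Sum>b\<in>A i. \<bar>q i s b\<bar>) = 1" for i s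
    using q unfolding policies_def by (simp add: sum.cong[OF refl, of _ "\<lambda>b. \<bar>q i s b\<bar>" "q i s"])
  then show "q \<in> nbhd" unfolding nbhd_def using kap_gt_1 by simp
qed

lemma line_open_nbhd: "line_open nbhd"
  unfolding line_open_def
proof (intro allI impI)
  fix x h t
  have "{u. pline x u h \<in> nbhd} = (\<Inter>i. \<Inter>s. {u. (\<Sum>b\<in>A i. \<bar>x i s b + u * h i s b\<bar>) < kap})"
    by (auto simp: nbhd_def pline_def)
  also have "open \<dots>"
    by (intro open_INT ballI open_Collect_less continuous_intros) auto
  finally show "pline x t h \<in> nbhd \<Longrightarrow> eventually (\<lambda>u. pline x u h \<in> nbhd) (nhds t)"
    using eventually_nhds_in_open[of "{u. pline x u h \<in> nbhd}" t] by simp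
qed

lemma has_pgrad_value_rational:
  obtains G where "\<And>i j s b. b \<in> A j \<Longrightarrow> rational_on A nbhd (G i j s b)"
    and "\<And>i. has_pgrad A nbhd (value_rational A P r rho i) (G i)"
proof -
  have "rational_on A nbhd (value_rational A P r rho i)" for i
    using det_resolvent_nonzero by (intro rational_on_value_rational) blast
  then have "\<forall>i. \<exists>Gi. (\<forall>j s b. b \<in> A j \<longrightarrow> rational_on A nbhd (Gi j s b))
      \<and> has_pgrad A nbhd (value_rational A P r rho i) Gi"
    using rational_on_has_pgrad A_fin by blast
  from choice[OF this] show ?thesis
    using that by blast
qed

lemma vgrad_eq_pgrad:
  assumes "has_pgrad A nbhd (value_rational A P r rho i) Gi" and "q \<in> nbhd" and "b \<in> A i"
  shows "vgrad A P r rho q i s b = Gi i s b q"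
  unfolding vgrad_def
  by (rule pderiv_coord_eq_pgrad[OF A_fin assms(3,2) line_open_nbhd _ assms(1)])
    (rule Vval_eq_value_rational)

lemma nash_player_first_order:
  assumes nash: "is_nash A P r rho p" and q: "q \<in> policies A"
    and G: "has_pgrad A nbhd (value_rational A P r rho i) Gi"
  shows "(\<Sum>s\<in>UNIV. \<Sum>b\<in>A i. pdiff q p i s b * Gi i s b p) \<le> 0"
proof (rule ccontr)
  define d where "d = pdiff q p"
  define h where "h = (\<lambda>j s b. if j = i then d j s b else 0)"
  have p: "p \<in> policies A"
    using nash by (simp add: is_nash_def)
  then have pU: "p \<in> nbhd"
    using policies_subset_nbhd by blast
  assume "\<not> ?thesis"
  have "((\<lambda>t. value_rational A P r rho i (pline p t h)) has_real_derivative
      pinner A h (\<lambda>j s b. Gi j s b p)) (at 0)"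
    using G pU unfolding has_pgrad_def by blast
  then have "((\<lambda>t. value_rational A P r rho i (pline p t h)) has_real_derivative
      (\<Sum>s\<in>UNIV. \<Sum>b\<in>A i. d i s b * Gi i s b p)) (at 0)"
    by (simp add: h_def pinner_restrict_player)
  from DERIV_pos_inc_right[OF this] \<open>\<not> ?thesis\<close> obtain \<delta> where "0 < \<delta>"
    and increase: "\<And>t. 0 < t \<Longrightarrow> t < \<delta> \<Longrightarrow>
        value_rational A P r rho i p < value_rational A P r rho i (pline p t h)"
    by (force simp: d_def)
  define t where "t = min (\<delta> / 2) 1"
  have t: "0 < t" "t < \<delta>" "t \<le> 1"
    unfolding t_def using \<open>0 < \<delta>\<close> by auto
  define q' where "q' = pline p t d"
  have "q' \<in> policies A"
    unfolding q'_def d_def using policies_convex[OF p q] t by auto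
  moreover have "pline p t h = p(i := q' i)"
    unfolding q'_def h_def by (auto simp: pline_def fun_eq_iff)
  moreover have "p(i := q' i) \<in> policies A"
    using p \<open>q' \<in> policies A\<close> unfolding policies_def by auto
  ultimately have "value_rational A P r rho i (pline p t h) \<le> value_rational A P r rho i p"
    using nash pU policies_subset_nbhd
    by (auto simp: is_nash_def Vval_eq_value_rational[symmetric])
  with increase[OF t(1,2)] show False
    by simp
qed

lemma nash_first_order:
  assumes nash: "is_nash A P r rho p" and q: "q \<in> policies A"
  shows "pinner A (vgrad A P r rho p) (pdiff q p) \<le> 0"
proof -
  obtain G where "\<And>i j s b. b \<in> A j \<Longrightarrow> rational_on A nbhd (G i j s b)"
    and G: "\<And>i. has_pgrad A nbhd (value_rational A P r rho i) (G i)"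
    using has_pgrad_value_rational[where r=r and rho=rho] by blast
  have "p \<in> nbhd"
    using nash policies_subset_nbhd by (auto simp: is_nash_def)
  then have "pinner A (vgrad A P r rho p) (pdiff q p) = pinner A (\<lambda>i s b. G i i s b p) (pdiff q p)"
    using vgrad_eq_pgrad[OF G] by (intro pinner_cong) auto
  also have "\<dots> = (\<Sum>i\<in>UNIV. \<Sum>s\<in>UNIV. \<Sum>b\<in>A i. pdiff q p i s b * G i i s b p)"
    unfolding pinner_def by (simp add: mult.commute)
  also have "\<dots> \<le> 0"
    using nash_player_first_order[OF nash q G] by (rule sum_nonpos)
  finally show ?thesis .
qed

lemma vgrad_local_expansion:
  assumes p: "p \<in> policies A"
  obtains v H where
    "\<And>q d. q \<in> policies A \<Longrightarrow> pinner A (vgrad A P r rho q) d = pinner A (\<lambda>i s b. v i s b q) d"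
    "\<And>i s b. b \<in> A i \<Longrightarrow> has_pgrad A nbhd (v i s b) (H i s b)"
    "\<And>i s b. b \<in> A i \<Longrightarrow> (v i s b \<longlongrightarrow> v i s b p) (pnhds A p)"
    "\<And>i s b j s' c. b \<in> A i \<Longrightarrow> c \<in> A j \<Longrightarrow> (H i s b j s' c \<longlongrightarrow> H i s b j s' c p) (pnhds A p)"
    "\<And>x. jac_quad A P r rho p x = quad_form A (\<lambda>i s b j s' c. H i s b j s' c p) x"
proof -
  have pU: "p \<in> nbhd"
    using p policies_subset_nbhd by blast
  obtain G where G: "\<And>i j s b. b \<in> A j \<Longrightarrow> rational_on A nbhd (G i j s b)"
    "\<And>i. has_pgrad A nbhd (value_rational A P r rho i) (G i)"
    using has_pgrad_value_rational[where r=r and rho=rho] by blast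
  define v where "v i s b = G i i s b" for i s b
  have v: "vgrad A P r rho q i s b = v i s b q" if "q \<in> nbhd" "b \<in> A i" for q i s b
    unfolding v_def using vgrad_eq_pgrad[OF G(2) that] .
  have "\<forall>k. \<exists>Hb. case k of (i, s, b) \<Rightarrow> b \<in> A i \<longrightarrow>
      (\<forall>j s' c. c \<in> A j \<longrightarrow> rational_on A nbhd (Hb j s' c)) \<and> has_pgrad A nbhd (v i s b) Hb"
    unfolding v_def using rational_on_has_pgrad[OF G(1) A_fin] by auto
  from choice[OF this] obtain H' where H': "\<And>i s b. b \<in> A i \<Longrightarrow>
      (\<forall>j s' c. c \<in> A j \<longrightarrow> rational_on A nbhd (H' (i, s, b) j s' c))
      \<and> has_pgrad A nbhd (v i s b) (H' (i, s, b))"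
    by force
  define H where "H i s b = H' (i, s, b)" for i s b
  have H: "\<And>i s b j s' c. b \<in> A i \<Longrightarrow> c \<in> A j \<Longrightarrow> rational_on A nbhd (H i s b j s' c)"
    "\<And>i s b. b \<in> A i \<Longrightarrow> has_pgrad A nbhd (v i s b) (H i s b)"
    unfolding H_def using H' by blast+
  show ?thesis
  proof (rule that[of v H])
    show "pinner A (vgrad A P r rho q) d = pinner A (\<lambda>i s b. v i s b q) d" if "q \<in> policies A" for q d
      using that policies_subset_nbhd v by (intro pinner_cong) auto
    show "(v i s b \<longlongrightarrow> v i s b p) (pnhds A p)" if "b \<in> A i" for i s b
      unfolding v_def using G(1)[OF that] A_fin pU by (rule rational_on_tendsto)
    show "(H i s b j s' c \<longlongrightarrow> H i s b j s' c p) (pnhds A p)" if "b \<in> A i" "c \<in> A j" for i s b j s' c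
      using H(1)[OF that] A_fin pU by (rule rational_on_tendsto)
    have "pderiv_coord (\<lambda>q. vgrad A P r rho q i s b) p j s' c = H i s b j s' c p"
      if "b \<in> A i" "c \<in> A j" for i s b j s' c
      using A_fin that(2) pU line_open_nbhd v[OF _ that(1)] H(2)[OF that(1)]
      by (rule pderiv_coord_eq_pgrad)
    then show "jac_quad A P r rho p x = quad_form A (\<lambda>i s b j s' c. H i s b j s' c p) x" for x
      unfolding jac_quad_eq_quad_form by (rule quad_form_cong)
  qed (use H in auto)
qed

lemma sos_nash_local_bound:
  assumes nash: "is_nash A P r rho p" and sos: "is_SOS A P r rho p"
  shows "\<exists>mu>0. \<exists>delta>0. \<forall>q\<in>policies A. pnorm A (pdiff q p) < delta \<longrightarrow>
    pinner A (vgrad A P r rho q) (pdiff q p) \<le> - mu * (pnorm A (pdiff q p))\<^sup>2"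
proof -
  have p: "p \<in> policies A"
    using nash by (simp add: is_nash_def)
  obtain v H where vgrad_v: "\<And>q d. q \<in> policies A \<Longrightarrow>
      pinner A (vgrad A P r rho q) d = pinner A (\<lambda>i s b. v i s b q) d"
    and H: "\<And>i s b. b \<in> A i \<Longrightarrow> has_pgrad A nbhd (v i s b) (H i s b)"
    and "\<And>i s b. b \<in> A i \<Longrightarrow> (v i s b \<longlongrightarrow> v i s b p) (pnhds A p)"
    and H_cont: "\<And>i s b j s' c. b \<in> A i \<Longrightarrow> c \<in> A j \<Longrightarrow>
      (H i s b j s' c \<longlongrightarrow> H i s b j s' c p) (pnhds A p)"
    and jac: "\<And>x. jac_quad A P r rho p x = quad_form A (\<lambda>i s b j s' c. H i s b j s' c p) x"
    by (fact vgrad_local_expansion[OF p, where r=r and rho=rho])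
  have first_order: "\<forall>q\<in>policies A. pinner A (\<lambda>i s b. v i s b p) (pdiff q p) \<le> 0"
    using nash_first_order[OF nash] vgrad_v[OF p] by simp
  have "\<forall>q\<in>policies A - {p}. quad_form A (\<lambda>i s b j s' c. H i s b j s' c p) (pdiff q p) < 0"
    using sos by (simp add: is_SOS_def jac)
  then obtain m where "0 < m"
    and "\<forall>q\<in>policies A. quad_form A (\<lambda>i s b j s' c. H i s b j s' c p) (pdiff q p)
           \<le> - m * (pnorm A (pdiff q p))\<^sup>2"
    using quad_form_le_neg_pnorm_sq[OF A_fin p] by blast
  from sos_local_bound[OF A_fin p policies_subset_nbhd H H_cont first_order this] show ?thesis
    by (simp add: vgrad_v)
qed

lemma strict_nash_local_bound:
  assumes nash: "is_nash A P r rho p" and strict: "is_strict A P r rho p"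
  shows "\<exists>mu>0. \<exists>delta>0. \<forall>q\<in>policies A. pnorm A (pdiff q p) < delta \<longrightarrow>
    pinner A (vgrad A P r rho q) (pdiff q p) \<le> - mu * pnorm A (pdiff q p)"
proof -
  have p: "p \<in> policies A"
    using nash by (simp add: is_nash_def)
  obtain v where vgrad_v: "\<And>q d. q \<in> policies A \<Longrightarrow>
      pinner A (vgrad A P r rho q) d = pinner A (\<lambda>i s b. v i s b q) d"
    and v_cont: "\<And>i s b. b \<in> A i \<Longrightarrow> (v i s b \<longlongrightarrow> v i s b p) (pnhds A p)"
    using vgrad_local_expansion[OF p, where r=r and rho=rho] by metis
  have "\<forall>q\<in>policies A - {p}. pinner A (\<lambda>i s b. v i s b p) (pdiff q p) < 0"
    using strict vgrad_v[OF p] by (simp add: is_strict_def)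
  from strict_local_bound[where v=v, OF A_fin p _ this v_cont] strict show ?thesis
    by (simp add: vgrad_v is_strict_def)
qed

end

lemma exists_kap:
  fixes zeta :: real
  assumes "0 < zeta"
  shows "\<exists>kap>1. (1 - zeta) * kap ^ n < 1"
proof -
  have "((\<lambda>k. (1 - zeta) * k ^ n) \<longlongrightarrow> (1 - zeta) * 1 ^ n) (at_right (1::real))"
    by (intro tendsto_intros)
  then have "eventually (\<lambda>k. (1 - zeta) * k ^ n < 1) (at_right (1::real))"
    using assms by (intro order_tendstoD(2)) auto
  then obtain b where "1 < b" "\<forall>y>1. y < b \<longrightarrow> (1 - zeta) * y ^ n < 1"
    unfolding eventually_at_right_field by blast
  then show ?thesis
    by (intro exI[of _ "(1 + b) / 2"]) auto
qed

theorem proposition1: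
  fixes A :: "'i::finite \<Rightarrow> 'a set"
    and P :: "'s::finite \<Rightarrow> ('i \<Rightarrow> 'a) \<Rightarrow> 's \<Rightarrow> real"
    and r :: "'i \<Rightarrow> 's \<Rightarrow> ('i \<Rightarrow> 'a) \<Rightarrow> real"
    and rho :: "'s \<Rightarrow> real"
    and zeta :: real
    and pistar :: "'i \<Rightarrow> 's \<Rightarrow> 'a \<Rightarrow> real"
  assumes A_fin: "\<And>i. finite (A i)"
    and A_ne: "\<And>i. A i \<noteq> {}"
    and r_bnd: "\<And>i s a. a \<in> joint_actions A \<Longrightarrow> \<bar>r i s a\<bar> \<le> 1"
    and P_nonneg: "\<And>s a s'. a \<in> joint_actions A \<Longrightarrow> 0 \<le> P s a s'"
    and zeta_pos: "zeta > 0"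
    and stop: "\<And>s a. a \<in> joint_actions A \<Longrightarrow> 1 - (\<Sum>s'\<in>UNIV. P s a s') \<ge> zeta"
    and rho_nonneg: "\<And>s. 0 \<le> rho s"
    and rho_sum: "(\<Sum>s\<in>UNIV. rho s) = 1"
    and nash: "is_nash A P r rho pistar"
  shows "(is_SOS A P r rho pistar \<longrightarrow>
            (\<exists>mu>0. \<exists>delta>0. \<forall>q\<in>policies A. pnorm A (pdiff q pistar) < delta \<longrightarrow>
               pinner A (vgrad A P r rho q) (pdiff q pistar) \<le> - mu * (pnorm A (pdiff q pistar))\<^sup>2))
       \<and> (is_strict A P r rho pistar \<longrightarrow>
            (\<exists>mu>0. \<exists>delta>0. \<forall>q\<in>policies A. pnorm A (pdiff q pistar) < delta \<longrightarrow>
               pinner A (vgrad A P r rho q) (pdiff q pistar) \<le> - mu * pnorm A (pdiff q pistar)))"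
proof -
  obtain kap where "1 < kap" "(1 - zeta) * kap ^ CARD('i) < 1"
    using exists_kap[OF zeta_pos] by blast
  then interpret stopping_game A P zeta kap
    using A_fin A_ne P_nonneg stop by unfold_locales
  show ?thesis
    using sos_nash_local_bound[OF nash] strict_nash_local_bound[OF nash] by blast
qed

end
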